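(* For each $n\in\mathbf{N}$ let $W_n = (w_{ij}^{(n)})_{i,j=1}^n$ be a random $n\times n$ Hermitian matrix whose upper triangular entries are jointly independent with mean zero, and assume: there are $\eta_n>0$ with $\eta_n\to0$ and $|w_{ij}^{(n)}|\le\eta_n$ for all $n,i,j$; there is a finite $C\ge0$ with $\sum_{j=1}^n \operatorname{Var}[w_{ij}^{(n)}]\le C$ for all $n$ and $i$; and \[ \lim_{n\to\infty} \frac{1}{n}\sum_{i=1}^n \biggl| \sum_{j=1}^n \Bigl( \operatorname{Var}\bigl[w_{ij}^{(n)}\bigr] - \frac{1}{n} \Bigr) \biggr| = 0. \] Fix $k\in\mathbf{N}$, let $t \in \mathbf{N}$ and $\mathbf{c} = (c_0,\ldots,c_k) \in \Gamma(k,t)$, and assume that $\mathbf{c}$ does not walk on any edge exactly once, i.e. for each $s \in\{1,\ldots,k\}$ there is $r \in \{1,\ldots,k\}$ with $r \ne s$ and $\{c_{s-1},c_s\} = \{c_{r-1},c_r\}$. Then $t \le k/2+1$, and: (i) if $t < k/2 + 1$, then $\displaystyle\lim_{n\to\infty}\frac1n \sum_{(i_0,\ldots,i_k) \in L(n,\mathbf{c})} \mathbf{E} \biggl[\prod_{s=1}^k w_{i_{s-1}i_s}^{(n)} \biggr] = 0$; (ii) if $t = k/2 + 1$, then $\displaystyle\lim_{n\to\infty} \frac{1}{n}\sum_{(i_0,\ldots,i_k) \in L(n,\mathbf{c})} \mathbf{E} \biggl[\prod_{s=1}^k w_{i_{s-1}i_s}^{(n)} \biggr] = 1$.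
   Context: A closed walk of length $k$ is a tuple $(i_0,\ldots,i_k)$ with $i_0=i_k$. Two closed walks $(i_0,\dots,i_k)$ and $(j_0,\dots,j_k)$ are isomorphic if for all $s,r\in\{0,\dots,k\}$, $i_s=i_r$ iff $j_s=j_r$. $\Gamma(k,t)$ is the set of canonical closed walks of length $k$ on $t$ vertices: closed walks $\mathbf{c}=(c_0,\ldots,c_k)$ with $\{c_0,\dots,c_k\}=\{1,\ldots,t\}$, $c_0=c_k=1$, and $c_s\le\max\{c_0,\ldots,c_{s-1}\}+1$ for each $s=1,\ldots,k$. $L(n,\mathbf{c})$ is the set of closed walks $(i_0,\ldots,i_k)$ with entries in $\{1,\ldots,n\}$ isomorphic to $\mathbf{c}$. $\operatorname{Var}[w]=\mathbf{E}|w-\mathbf{E}w|^2$. *)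

theory Defs
  imports "HOL-Probability.Probability"
begin

definition cvar :: "'a measure \<Rightarrow> ('a \<Rightarrow> complex) \<Rightarrow> real" where
  "cvar M X = integral\<^sup>L M (\<lambda>x. (cmod (X x - integral\<^sup>L M X))\<^sup>2)"

definition closed_walk :: "nat \<Rightarrow> nat list \<Rightarrow> bool" where
  "closed_walk k c \<longleftrightarrow> length c = Suc k \<and> c ! 0 = c ! k"

definition walk_iso :: "nat list \<Rightarrow> nat list \<Rightarrow> bool" where
  "walk_iso i j \<longleftrightarrow> length i = length j \<and>
     (\<forall>s < length i. \<forall>r < length i. (i ! s = i ! r) \<longleftrightarrow> (j ! s = j ! r))"

definition Gamma :: "nat \<Rightarrow> nat \<Rightarrow> nat list set" where
  "Gamma k t = {c. closed_walk k c \<and> set c = {1..t} \<and> c ! 0 = 1 \<and> c ! k = 1 \<and>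
      (\<forall>s\<in>{1..k}. c ! s \<le> Max ((\<lambda>r. c ! r) ` {0..<s}) + 1)}"

definition Lwalks :: "nat \<Rightarrow> nat \<Rightarrow> nat list \<Rightarrow> nat list set" where
  "Lwalks n k c = {i. closed_walk k i \<and> set i \<subseteq> {1..n} \<and> walk_iso i c}"

end

theory Submission
  imports Defs
begin

text \<open>
  The walks in \<open>L(n, c)\<close> are the images \<open>\<phi> \<circ> c\<close> of the injective labelings
  \<open>\<phi> : {1..t} \<rightarrow> {1..n}\<close>. Entering each vertex \<open>v \<ge> 2\<close> for the first time from its
  predecessor \<open>p(v)\<close> gives a spanning tree with \<open>t - 1\<close> edges among the distinct edges of \<open>c\<close>;
  since every edge is walked at least twice there are at most \<open>k/2\<close> distinct edges, whence
  \<open>t \<le> k/2 + 1\<close>.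

  By independence the expectation factors over the distinct edges. An edge walked \<open>m\<close> times
  contributes at most \<open>\<eta>\<^sup>m\<close>, and a tree edge at most \<open>\<eta>\<^bsup>m-2\<^esup>\<close> times its variance, so the walk is
  bounded by \<open>\<eta>\<^bsup>k - 2(t-1)\<^esup>\<close> times the tree weight
  \<open>\<Prod>\<^sub>v Var w\<^bsub>\<phi>(p(v)) \<phi>(v)\<^esub>\<close>. Summing over labelings leaf by leaf, the row-sum
  bound gives a total tree weight of at most \<open>C\<^bsup>t-1\<^esup> n\<close>, which proves (i). If
  \<open>k = 2(t - 1)\<close>, every edge is a tree edge walked exactly twice, once in each direction, so the
  expectation equals the tree weight. Peeling leaves now shows that \<open>1/n\<close> times the tree
  weight summed over all labelings tends to \<open>1\<close> by the variance profile hypothesis, while the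
  non-injective labelings contribute \<open>O(\<eta>\<^sup>2 n)\<close>; this proves (ii).
\<close>

section \<open>Sums over labelings of a rooted tree\<close>

abbreviation labelings :: "nat \<Rightarrow> nat \<Rightarrow> (nat \<Rightarrow> nat) set" where
  "labelings m n \<equiv> PiE {1..m} (\<lambda>_. {1..n})"

abbreviation tree_weight :: "(nat \<Rightarrow> nat \<Rightarrow> nat \<Rightarrow> real) \<Rightarrow> (nat \<Rightarrow> nat) \<Rightarrow> nat \<Rightarrow> (nat \<Rightarrow> nat) \<Rightarrow> real"
  where "tree_weight K par m \<phi> \<equiv> \<Prod>v\<in>{2..m}. K v (\<phi> (par v)) (\<phi> v)"

lemma sum_PiE_insert:
  fixes F :: "('a \<Rightarrow> 'b) \<Rightarrow> 'c::comm_monoid_add"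
  assumes "a \<notin> A"
  shows "(\<Sum>\<phi>\<in>PiE (insert a A) B. F \<phi>) = (\<Sum>\<phi>\<in>PiE A B. \<Sum>y\<in>B a. F (\<phi>(a := y)))"
proof -
  have "(\<Sum>\<phi>\<in>PiE (insert a A) B. F \<phi>) = (\<Sum>(y, \<phi>)\<in>B a \<times> PiE A B. F (\<phi>(a := y)))"
    unfolding PiE_insert_eq by (subst sum.reindex[OF inj_combinator[OF assms]]) (simp add: comp_def case_prod_unfold)
  also have "\<dots> = (\<Sum>y\<in>B a. \<Sum>\<phi>\<in>PiE A B. F (\<phi>(a := y)))"
    by (rule sum.cartesian_product[symmetric])
  finally show ?thesis
    by (simp add: sum.swap[of _ "B a"])
qed

lemma tree_sum_peel_last:
  fixes K :: "nat \<Rightarrow> nat \<Rightarrow> nat \<Rightarrow> real"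
  assumes par: "\<And>v. v \<in> {2..Suc m} \<Longrightarrow> 1 \<le> par v \<and> par v < v" and "m \<ge> 1"
  shows "(\<Sum>\<phi>\<in>labelings (Suc m) n. tree_weight K par (Suc m) \<phi> * G (\<phi> (Suc m)) (\<phi> u))
    = (\<Sum>\<phi>\<in>labelings m n. tree_weight K par m \<phi> *
          (\<Sum>y=1..n. K (Suc m) (\<phi> (par (Suc m))) y * G y ((\<phi>(Suc m := y)) u)))"
proof -
  have vertices: "{1..Suc m} = insert (Suc m) {1..m}" "{2..Suc m} = insert (Suc m) {2..m}"
    using \<open>m \<ge> 1\<close> by auto
  have weight_upd: "tree_weight K par (Suc m) (\<phi>(Suc m := y))
      = tree_weight K par m \<phi> * K (Suc m) (\<phi> (par (Suc m))) y" for \<phi> y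
  proof -
    have "tree_weight K par m (\<phi>(Suc m := y)) = tree_weight K par m \<phi>"
    proof (intro prod.cong refl)
      fix v assume "v \<in> {2..m}"
      then have "par v \<noteq> Suc m" "v \<noteq> Suc m"
        using par[of v] by auto
      then show "K v ((\<phi>(Suc m := y)) (par v)) ((\<phi>(Suc m := y)) v) = K v (\<phi> (par v)) (\<phi> v)"
        by simp
    qed
    moreover have "par (Suc m) \<noteq> Suc m"
      using par[of "Suc m"] \<open>m \<ge> 1\<close> by auto
    ultimately show ?thesis
      unfolding vertices by (simp add: mult.commute)
  qed
  have "(\<Sum>\<phi>\<in>labelings (Suc m) n. tree_weight K par (Suc m) \<phi> * G (\<phi> (Suc m)) (\<phi> u))
      = (\<Sum>\<phi>\<in>labelings m n. \<Sum>y=1..n.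
           tree_weight K par (Suc m) (\<phi>(Suc m := y)) * G y ((\<phi>(Suc m := y)) u))"
    unfolding vertices(1) by (subst sum_PiE_insert) auto
  then show ?thesis
    by (simp only: weight_upd sum_distrib_left mult.assoc)
qed

lemma tree_sum_peel_marked_leaf:
  fixes K :: "nat \<Rightarrow> nat \<Rightarrow> nat \<Rightarrow> real"
  assumes "\<And>v. v \<in> {2..Suc m} \<Longrightarrow> 1 \<le> par v \<and> par v < v" and "m \<ge> 1"
  shows "(\<Sum>\<phi>\<in>labelings (Suc m) n. tree_weight K par (Suc m) \<phi> * g (\<phi> (Suc m)))
    = (\<Sum>\<phi>\<in>labelings m n. tree_weight K par m \<phi> * (\<Sum>y=1..n. K (Suc m) (\<phi> (par (Suc m))) y * g y))"
  using tree_sum_peel_last[OF assms, where K=K and n=n and G="\<lambda>_ x. g x" and u="Suc m"] by simp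

lemma tree_sum_peel_unmarked_leaf_le:
  fixes K :: "nat \<Rightarrow> nat \<Rightarrow> nat \<Rightarrow> real"
  assumes par: "\<And>v. v \<in> {2..Suc m} \<Longrightarrow> 1 \<le> par v \<and> par v < v" and "m \<ge> 1"
    and K_nonneg: "\<And>v x y. K v x y \<ge> 0"
    and row: "\<And>x. x \<in> {1..n} \<Longrightarrow> (\<Sum>y=1..n. K (Suc m) x y) \<le> D"
    and g_nonneg: "\<And>j. g j \<ge> 0" and "u \<in> {1..m}"
  shows "(\<Sum>\<phi>\<in>labelings (Suc m) n. tree_weight K par (Suc m) \<phi> * g (\<phi> u))
    \<le> (\<Sum>\<phi>\<in>labelings m n. tree_weight K par m \<phi> * g (\<phi> u)) * D"
proof -
  have "par (Suc m) \<in> {1..m}"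
    using par[of "Suc m"] \<open>m \<ge> 1\<close> by auto
  have "(\<Sum>\<phi>\<in>labelings (Suc m) n. tree_weight K par (Suc m) \<phi> * g (\<phi> u))
      = (\<Sum>\<phi>\<in>labelings m n. tree_weight K par m \<phi> * g (\<phi> u) * (\<Sum>y=1..n. K (Suc m) (\<phi> (par (Suc m))) y))"
    using tree_sum_peel_last[OF par \<open>m \<ge> 1\<close>, where K=K and n=n and G="\<lambda>_ x. g x" and u=u] \<open>u \<in> {1..m}\<close>
    by (simp add: sum_distrib_left sum_distrib_right mult_ac)
  also have "\<dots> \<le> (\<Sum>\<phi>\<in>labelings m n. tree_weight K par m \<phi> * g (\<phi> u) * D)"
  proof (intro sum_mono mult_left_mono)
    fix \<phi> assume "\<phi> \<in> labelings m n"
    then show "(\<Sum>y=1..n. K (Suc m) (\<phi> (par (Suc m))) y) \<le> D"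
      using row \<open>par (Suc m) \<in> {1..m}\<close> by (auto simp: PiE_iff)
    show "0 \<le> tree_weight K par m \<phi> * g (\<phi> u)"
      using K_nonneg g_nonneg by (simp add: prod_nonneg)
  qed
  finally show ?thesis
    by (simp add: sum_distrib_right)
qed

lemma tree_sum_le:
  fixes K :: "nat \<Rightarrow> nat \<Rightarrow> nat \<Rightarrow> real"
  assumes "1 \<le> m"
    and "\<And>v. v \<in> {2..m} \<Longrightarrow> 1 \<le> par v \<and> par v < v"
    and "\<And>v x y. K v x y \<ge> 0"
    and "\<And>v x. v \<in> {2..m} \<Longrightarrow> x \<in> {1..n} \<Longrightarrow> (\<Sum>y=1..n. K v x y) \<le> D"
    and "\<And>v y. v \<in> {2..m} \<Longrightarrow> y \<in> {1..n} \<Longrightarrow> (\<Sum>x=1..n. K v x y) \<le> D"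
    and "D \<ge> 0" and "\<And>j. g j \<ge> 0" and "u \<in> {1..m}"
  shows "(\<Sum>\<phi>\<in>labelings m n. tree_weight K par m \<phi> * g (\<phi> u)) \<le> D ^ (m - 1) * (\<Sum>j=1..n. g j)"
  using assms
proof (induction m arbitrary: g u rule: nat_induct_at_least)
  case base
  then show ?case
    using sum_PiE_insert[of "1::nat" "{}" "\<lambda>\<phi>. g (\<phi> 1)" "\<lambda>_. {1..n}"] by simp
next
  case (Suc m)
  have par: "1 \<le> par v \<and> par v < v" if "v \<in> {2..Suc m}" for v
    using Suc.prems(1) that by blast
  have IH: "(\<Sum>\<phi>\<in>labelings m n. tree_weight K par m \<phi> * g' (\<phi> u')) \<le> D ^ (m - 1) * (\<Sum>j=1..n. g' j)"
    if "\<And>j. g' j \<ge> 0" "u' \<in> {1..m}" for g' u'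
    using Suc.IH[of g' u'] Suc.prems that by auto
  have power_step: "D ^ m = D ^ (m - 1) * D"
    using \<open>m \<ge> 1\<close> by (cases m) auto
  txt \<open>Vertex \<open>Suc m\<close> is a leaf. If it carries the weight \<open>g\<close>, summing it out moves the weight to
    its parent at the cost of a column sum; otherwise it is summed out at the cost of a row sum.\<close>
  show ?case
  proof (cases "u = Suc m")
    case True
    define g' where "g' x = (\<Sum>y=1..n. K (Suc m) x y * g y)" for x
    have "(\<Sum>x=1..n. g' x) = (\<Sum>y=1..n. g y * (\<Sum>x=1..n. K (Suc m) x y))"
      unfolding g'_def by (subst sum.swap) (simp add: sum_distrib_left mult.commute)
    also have "\<dots> \<le> (\<Sum>y=1..n. g y * D)"
      using Suc.prems(4)[of "Suc m"] Suc.prems(6) \<open>m \<ge> 1\<close> by (intro sum_mono mult_left_mono) auto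
    finally have sum_g': "(\<Sum>x=1..n. g' x) \<le> (\<Sum>j=1..n. g j) * D"
      by (simp add: sum_distrib_right)
    have "(\<Sum>\<phi>\<in>labelings (Suc m) n. tree_weight K par (Suc m) \<phi> * g (\<phi> u))
        = (\<Sum>\<phi>\<in>labelings m n. tree_weight K par m \<phi> * g' (\<phi> (par (Suc m))))"
      unfolding True g'_def by (rule tree_sum_peel_marked_leaf[OF par \<open>m \<ge> 1\<close>])
    also have "\<dots> \<le> D ^ (m - 1) * (\<Sum>x=1..n. g' x)"
    proof (rule IH)
      show "par (Suc m) \<in> {1..m}"
        using par[of "Suc m"] \<open>m \<ge> 1\<close> by auto
    qed (use Suc.prems in \<open>auto simp: g'_def intro!: sum_nonneg\<close>)
    also have "\<dots> \<le> D ^ (m - 1) * ((\<Sum>j=1..n. g j) * D)"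
      using sum_g' Suc.prems(5) by (simp add: mult_left_mono)
    also have "\<dots> = D ^ (Suc m - 1) * (\<Sum>j=1..n. g j)"
      by (simp add: power_step mult_ac)
    finally show ?thesis .
  next
    case False
    then have u: "u \<in> {1..m}"
      using Suc.prems by auto
    have "(\<Sum>\<phi>\<in>labelings (Suc m) n. tree_weight K par (Suc m) \<phi> * g (\<phi> u))
        \<le> (\<Sum>\<phi>\<in>labelings m n. tree_weight K par m \<phi> * g (\<phi> u)) * D"
      using Suc.prems(3) \<open>m \<ge> 1\<close> by (intro tree_sum_peel_unmarked_leaf_le[OF par \<open>m \<ge> 1\<close>]) (use Suc.prems u in auto)
    also have "\<dots> \<le> D ^ (m - 1) * (\<Sum>j=1..n. g j) * D"
      using IH[OF Suc.prems(6) u] Suc.prems(5) by (rule mult_right_mono)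
    also have "\<dots> = D ^ (Suc m - 1) * (\<Sum>j=1..n. g j)"
      by (simp add: power_step mult_ac)
    finally show ?thesis .
  qed
qed

lemma tree_sum_diff_le:
  fixes K :: "nat \<Rightarrow> nat \<Rightarrow> nat \<Rightarrow> real"
  assumes "m \<ge> 1"
    and par: "\<And>v. v \<in> {2..Suc m} \<Longrightarrow> 1 \<le> par v \<and> par v < v"
    and "\<And>v x y. K v x y \<ge> 0"
    and "\<And>v x. v \<in> {2..Suc m} \<Longrightarrow> x \<in> {1..n} \<Longrightarrow> (\<Sum>y=1..n. K v x y) \<le> D"
    and "\<And>v y. v \<in> {2..Suc m} \<Longrightarrow> y \<in> {1..n} \<Longrightarrow> (\<Sum>x=1..n. K v x y) \<le> D"
    and "D \<ge> 0"
  shows "\<bar>(\<Sum>\<phi>\<in>labelings (Suc m) n. tree_weight K par (Suc m) \<phi>) - (\<Sum>\<phi>\<in>labelings m n. tree_weight K par m \<phi>)\<bar>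
       \<le> D ^ (m - 1) * (\<Sum>x=1..n. \<bar>(\<Sum>y=1..n. K (Suc m) x y) - 1\<bar>)"
proof -
  define R where "R x = (\<Sum>y=1..n. K (Suc m) x y)" for x
  have "(\<Sum>\<phi>\<in>labelings (Suc m) n. tree_weight K par (Suc m) \<phi>) - (\<Sum>\<phi>\<in>labelings m n. tree_weight K par m \<phi>)
      = (\<Sum>\<phi>\<in>labelings m n. tree_weight K par m \<phi> * (R (\<phi> (par (Suc m))) - 1))"
    using tree_sum_peel_last[OF par \<open>m \<ge> 1\<close>, where K=K and n=n and G="\<lambda>_ _. 1" and u=1]
    by (simp add: R_def sum_subtractf algebra_simps)
  also have "\<bar>\<dots>\<bar> \<le> (\<Sum>\<phi>\<in>labelings m n. tree_weight K par m \<phi> * \<bar>R (\<phi> (par (Suc m))) - 1\<bar>)"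
    using assms(3) by (intro order_trans[OF sum_abs]) (simp add: abs_mult prod_nonneg)
  also have "\<dots> \<le> D ^ (m - 1) * (\<Sum>x=1..n. \<bar>R x - 1\<bar>)"
  proof (rule tree_sum_le)
    show "par (Suc m) \<in> {1..m}"
      using par[of "Suc m"] \<open>m \<ge> 1\<close> by auto
  qed (use assms in auto)
  finally show ?thesis
    unfolding R_def .
qed

lemma tree_sum_normalized_tendsto:
  fixes V :: "nat \<Rightarrow> nat \<Rightarrow> nat \<Rightarrow> real"
  assumes "1 \<le> m"
    and "\<And>v. v \<in> {2..m} \<Longrightarrow> 1 \<le> par v \<and> par v < v"
    and "\<And>n x y. V n x y \<ge> 0"
    and "\<And>n x. x \<in> {1..n} \<Longrightarrow> (\<Sum>y=1..n. V n x y) \<le> D"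
    and "\<And>n y. y \<in> {1..n} \<Longrightarrow> (\<Sum>x=1..n. V n x y) \<le> D"
    and "D \<ge> 0"
    and "(\<lambda>n. (1 / real n) * (\<Sum>x=1..n. \<bar>(\<Sum>y=1..n. V n x y) - 1\<bar>)) \<longlonglongrightarrow> 0"
  shows "(\<lambda>n. (1 / real n) * (\<Sum>\<phi>\<in>labelings m n. tree_weight (\<lambda>_. V n) par m \<phi>)) \<longlonglongrightarrow> 1"
  using assms
proof (induction m rule: nat_induct_at_least)
  case base
  have "(1 / real n) * (\<Sum>\<phi>\<in>labelings 1 n. tree_weight (\<lambda>_. V n) par 1 \<phi>) = 1" if "n \<ge> 1" for n
    using that by (simp add: card_PiE)
  then show ?case
    by (intro tendsto_eventually eventually_sequentiallyI[of 1])
next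
  case (Suc m)
  define S where "S j n = (\<Sum>\<phi>\<in>labelings j n. tree_weight (\<lambda>_. V n) par j \<phi>)" for j n
  have "(\<lambda>n. (1 / real n) * S m n) \<longlonglongrightarrow> 1"
    unfolding S_def using Suc by auto
  moreover have "(\<lambda>n. (1 / real n) * S (Suc m) n - (1 / real n) * S m n) \<longlonglongrightarrow> 0"
  proof (rule Lim_null_comparison)
    show "\<forall>\<^sub>F n in sequentially. norm ((1 / real n) * S (Suc m) n - (1 / real n) * S m n)
        \<le> D ^ (m - 1) * ((1 / real n) * (\<Sum>x=1..n. \<bar>(\<Sum>y=1..n. V n x y) - 1\<bar>))"
    proof (intro always_eventually allI)
      fix n
      have "\<bar>S (Suc m) n - S m n\<bar> \<le> D ^ (m - 1) * (\<Sum>x=1..n. \<bar>(\<Sum>y=1..n. V n x y) - 1\<bar>)"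
        unfolding S_def by (rule tree_sum_diff_le[where K="\<lambda>_. V n"]) (use Suc in auto)
      then show "norm ((1 / real n) * S (Suc m) n - (1 / real n) * S m n)
          \<le> D ^ (m - 1) * ((1 / real n) * (\<Sum>x=1..n. \<bar>(\<Sum>y=1..n. V n x y) - 1\<bar>))"
        by (simp add: diff_divide_distrib[symmetric] divide_right_mono)
    qed
    show "(\<lambda>n. D ^ (m - 1) * ((1 / real n) * (\<Sum>x=1..n. \<bar>(\<Sum>y=1..n. V n x y) - 1\<bar>))) \<longlonglongrightarrow> 0"
      using tendsto_mult_right_zero[OF Suc.prems(6)] by simp
  qed
  ultimately have "(\<lambda>n. (1 / real n) * S (Suc m) n) \<longlonglongrightarrow> 1"
    by (rule Lim_transform)
  then show ?case
    unfolding S_def .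
qed

lemma tree_sum_coincident_le:
  fixes V :: "nat \<Rightarrow> nat \<Rightarrow> real"
  assumes "1 \<le> m"
    and par: "\<And>v. v \<in> {2..m} \<Longrightarrow> 1 \<le> par v \<and> par v < v"
    and V_nonneg: "\<And>x y. V x y \<ge> 0"
    and V_le: "\<And>x y. x \<in> {1..n} \<Longrightarrow> y \<in> {1..n} \<Longrightarrow> V x y \<le> e"
    and row: "\<And>x. x \<in> {1..n} \<Longrightarrow> (\<Sum>y=1..n. V x y) \<le> D"
    and col: "\<And>y. y \<in> {1..n} \<Longrightarrow> (\<Sum>x=1..n. V x y) \<le> D"
    and "D \<ge> 1" and "e \<ge> 0"
    and ab: "a \<in> {1..m}" "b \<in> {1..m}" "a < b"
  shows "(\<Sum>\<phi>\<in>{\<phi>\<in>labelings m n. \<phi> a = \<phi> b}. tree_weight (\<lambda>_. V) par m \<phi>) \<le> e * D ^ (m - 1) * real n"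
proof -
  txt \<open>Reattach \<open>b\<close> to \<open>a\<close> through the identity kernel: on labelings with \<open>\<phi> a = \<phi> b\<close> this
    changes only the factor of \<open>b\<close>, which is at most \<open>e\<close>.\<close>
  define K where "K v x y = (if v = b then (if x = y then 1 else 0) else V x y)" for v x y :: nat
  define par' where "par' = par(b := a)"
  have b: "b \<in> {2..m}"
    using ab by auto
  have K_nonneg: "K v x y \<ge> 0" for v x y
    unfolding K_def using V_nonneg by auto
  have modified_tree_sum: "(\<Sum>\<phi>\<in>labelings m n. tree_weight K par' m \<phi> * 1) \<le> D ^ (m - 1) * (\<Sum>j=1..n. 1)"
  proof (rule tree_sum_le)
    show "1 \<le> par' v \<and> par' v < v" if "v \<in> {2..m}" for v
      using par[OF that] ab unfolding par'_def by auto
    show "(\<Sum>y=1..n. K v x y) \<le> D" if "v \<in> {2..m}" "x \<in> {1..n}" for v x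
      unfolding K_def using that row \<open>D \<ge> 1\<close> by (cases "v = b") (auto simp: sum.delta')
    show "(\<Sum>x=1..n. K v x y) \<le> D" if "v \<in> {2..m}" "y \<in> {1..n}" for v y
      unfolding K_def using that col \<open>D \<ge> 1\<close> by (cases "v = b") (auto simp: sum.delta)
  qed (use K_nonneg \<open>D \<ge> 1\<close> \<open>1 \<le> m\<close> in auto)
  have pointwise: "tree_weight (\<lambda>_. V) par m \<phi> \<le> e * tree_weight K par' m \<phi>"
    if "\<phi> \<in> labelings m n" "\<phi> a = \<phi> b" for \<phi>
  proof -
    have "\<phi> (par b) \<in> {1..n}" "\<phi> b \<in> {1..n}"
      using that(1) par[OF b] ab by (auto simp: PiE_iff)
    then have "tree_weight (\<lambda>_. V) par m \<phi> \<le> e * (\<Prod>v\<in>{2..m}-{b}. V (\<phi> (par v)) (\<phi> v))"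
      unfolding prod.remove[OF finite_atLeastAtMost b]
      by (intro mult_right_mono V_le prod_nonneg V_nonneg)
    also have "(\<Prod>v\<in>{2..m}-{b}. V (\<phi> (par v)) (\<phi> v)) = tree_weight K par' m \<phi>"
      unfolding prod.remove[OF finite_atLeastAtMost b, of "\<lambda>v. K v (\<phi> (par' v)) (\<phi> v)"]
      using that(2) by (simp add: K_def par'_def)
    finally show ?thesis .
  qed
  have "(\<Sum>\<phi>\<in>{\<phi>\<in>labelings m n. \<phi> a = \<phi> b}. tree_weight (\<lambda>_. V) par m \<phi>)
      \<le> (\<Sum>\<phi>\<in>{\<phi>\<in>labelings m n. \<phi> a = \<phi> b}. e * tree_weight K par' m \<phi>)"
    by (intro sum_mono pointwise) auto
  also have "\<dots> \<le> (\<Sum>\<phi>\<in>labelings m n. e * tree_weight K par' m \<phi>)"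
    using \<open>e \<ge> 0\<close> K_nonneg by (intro sum_mono2) (auto simp: finite_PiE prod_nonneg)
  also have "\<dots> \<le> e * (D ^ (m - 1) * real n)"
    using modified_tree_sum \<open>e \<ge> 0\<close> by (simp add: sum_distrib_left[symmetric] mult_left_mono)
  finally show ?thesis
    by simp
qed

lemma sum_UN_le:
  fixes f :: "'a \<Rightarrow> real"
  assumes "finite I" "\<And>i. i \<in> I \<Longrightarrow> finite (A i)" "\<And>x. f x \<ge> 0"
  shows "sum f (\<Union>i\<in>I. A i) \<le> (\<Sum>i\<in>I. sum f (A i))"
  using assms
proof (induction I rule: finite_induct)
  case (insert a I)
  have "finite (A a)" "finite (\<Union>i\<in>I. A i)"
    using insert by auto
  then have "sum f (A a \<union> (\<Union>i\<in>I. A i)) + sum f (A a \<inter> (\<Union>i\<in>I. A i)) = sum f (A a) + sum f (\<Union>i\<in>I. A i)"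
    by (rule sum.union_inter)
  moreover have "sum f (A a \<inter> (\<Union>i\<in>I. A i)) \<ge> 0"
    using insert.prems by (simp add: sum_nonneg)
  ultimately have "sum f (\<Union>i\<in>insert a I. A i) \<le> sum f (A a) + sum f (\<Union>i\<in>I. A i)"
    by simp
  then show ?case
    using insert by simp
qed simp

lemma not_inj_on_less:
  fixes \<phi> :: "'a::linorder \<Rightarrow> 'b"
  assumes "\<not> inj_on \<phi> I"
  obtains a b where "a \<in> I" "b \<in> I" "a < b" "\<phi> a = \<phi> b"
proof -
  obtain x y where xy: "x \<in> I" "y \<in> I" "x \<noteq> y" "\<phi> x = \<phi> y"
    using assms unfolding inj_on_def by blast
  show ?thesis
  proof (cases "x < y")
    case True
    then show ?thesis
      using that[of x y] xy by blast
  next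
    case False
    then have "y < x"
      using xy(3) by simp
    then show ?thesis
      using that[of y x] xy by simp
  qed
qed

lemma tree_sum_noninj_le:
  fixes V :: "nat \<Rightarrow> nat \<Rightarrow> real"
  assumes "1 \<le> m"
    and "\<And>v. v \<in> {2..m} \<Longrightarrow> 1 \<le> par v \<and> par v < v"
    and V_nonneg: "\<And>x y. V x y \<ge> 0"
    and "\<And>x y. x \<in> {1..n} \<Longrightarrow> y \<in> {1..n} \<Longrightarrow> V x y \<le> e"
    and "\<And>x. x \<in> {1..n} \<Longrightarrow> (\<Sum>y=1..n. V x y) \<le> D"
    and "\<And>y. y \<in> {1..n} \<Longrightarrow> (\<Sum>x=1..n. V x y) \<le> D"
    and "D \<ge> 1" and "e \<ge> 0"
  shows "(\<Sum>\<phi>\<in>{\<phi>\<in>labelings m n. \<not> inj_on \<phi> {1..m}}. tree_weight (\<lambda>_. V) par m \<phi>)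
    \<le> real (m * m) * (e * D ^ (m - 1) * real n)"
proof -
  define Pairs where "Pairs = {p \<in> {1..m} \<times> {1..m}. fst p < snd p}"
  define S where "S p = {\<phi>\<in>labelings m n. \<phi> (fst p) = \<phi> (snd p)}" for p :: "nat \<times> nat"
  have weight_nonneg: "tree_weight (\<lambda>_. V) par m \<phi> \<ge> 0" for \<phi>
    using V_nonneg by (simp add: prod_nonneg)
  have "finite Pairs"
    unfolding Pairs_def by (rule finite_subset[of _ "{1..m} \<times> {1..m}"]) auto
  have card_Pairs: "card Pairs \<le> m * m"
    using card_mono[of "{1..m} \<times> {1..m}" Pairs] unfolding Pairs_def by auto
  have "{\<phi>\<in>labelings m n. \<not> inj_on \<phi> {1..m}} \<subseteq> (\<Union>p\<in>Pairs. S p)"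
  proof
    fix \<phi> assume \<phi>: "\<phi> \<in> {\<phi>\<in>labelings m n. \<not> inj_on \<phi> {1..m}}"
    then obtain a b where "a \<in> {1..m}" "b \<in> {1..m}" "a < b" "\<phi> a = \<phi> b"
      by (auto elim: not_inj_on_less)
    then show "\<phi> \<in> (\<Union>p\<in>Pairs. S p)"
      using \<phi> unfolding Pairs_def S_def by (intro UN_I[of "(a, b)"]) auto
  qed
  then have "(\<Sum>\<phi>\<in>{\<phi>\<in>labelings m n. \<not> inj_on \<phi> {1..m}}. tree_weight (\<lambda>_. V) par m \<phi>)
      \<le> (\<Sum>\<phi>\<in>(\<Union>p\<in>Pairs. S p). tree_weight (\<lambda>_. V) par m \<phi>)"
    using \<open>finite Pairs\<close> weight_nonneg by (intro sum_mono2) (auto simp: S_def finite_PiE)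
  also have "\<dots> \<le> (\<Sum>p\<in>Pairs. \<Sum>\<phi>\<in>S p. tree_weight (\<lambda>_. V) par m \<phi>)"
    using \<open>finite Pairs\<close> weight_nonneg by (intro sum_UN_le) (auto simp: S_def finite_PiE)
  also have "\<dots> \<le> (\<Sum>p\<in>Pairs. e * D ^ (m - 1) * real n)"
  proof (rule sum_mono)
    fix p assume "p \<in> Pairs"
    then show "(\<Sum>\<phi>\<in>S p. tree_weight (\<lambda>_. V) par m \<phi>) \<le> e * D ^ (m - 1) * real n"
      unfolding S_def Pairs_def by (intro tree_sum_coincident_le[OF assms]) auto
  qed
  also have "\<dots> = real (card Pairs) * (e * D ^ (m - 1) * real n)"
    by simp
  also have "\<dots> \<le> real (m * m) * (e * D ^ (m - 1) * real n)"
  proof (rule mult_right_mono)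
    show "real (card Pairs) \<le> real (m * m)"
      using card_Pairs by linarith
  qed (use \<open>D \<ge> 1\<close> \<open>e \<ge> 0\<close> in auto)
  finally show ?thesis .
qed

section \<open>Canonical closed walks\<close>

abbreviation every_edge_repeated :: "nat \<Rightarrow> nat list \<Rightarrow> bool" where
  "every_edge_repeated k c \<equiv>
     \<forall>s\<in>{1..k}. \<exists>r\<in>{1..k}. r \<noteq> s \<and> {c ! (s - 1), c ! s} = {c ! (r - 1), c ! r}"

definition first_visit :: "nat list \<Rightarrow> nat \<Rightarrow> nat" where
  "first_visit c v = (LEAST s. c ! s = v)"

text \<open>For a canonical walk the edges \<open>(walk_parent c v, v)\<close>, \<open>v = 2..t\<close>, form a spanning tree
  rooted at \<open>1\<close>.\<close>
definition walk_parent :: "nat list \<Rightarrow> nat \<Rightarrow> nat" where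
  "walk_parent c v = c ! (first_visit c v - 1)"

text \<open>Normalising to (smaller, larger) endpoint makes \<open>walk_edge i s\<close> the index of the
  upper-triangular matrix entry met in step \<open>s\<close>.\<close>
definition walk_edge :: "nat list \<Rightarrow> nat \<Rightarrow> nat \<times> nat" where
  "walk_edge i s = (min (i ! (s - 1)) (i ! s), max (i ! (s - 1)) (i ! s))"

abbreviation edge_steps :: "nat list \<Rightarrow> nat \<Rightarrow> nat \<times> nat \<Rightarrow> nat set" where
  "edge_steps i k p \<equiv> {s \<in> {1..k}. walk_edge i s = p}"

definition edge_mult :: "nat list \<Rightarrow> nat \<Rightarrow> nat \<times> nat \<Rightarrow> nat" where
  "edge_mult i k p = card (edge_steps i k p)"

lemma Gamma_D:
  assumes "c \<in> Gamma k t"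
  shows "length c = Suc k" "c ! 0 = 1" "c ! k = 1" "set c = {1..t}" "t \<ge> 1"
    "\<And>s. s \<in> {1..k} \<Longrightarrow> c ! s \<le> Max ((\<lambda>r. c ! r) ` {0..<s}) + 1"
proof -
  show "length c = Suc k" "c ! 0 = 1" "c ! k = 1" "set c = {1..t}"
    "\<And>s. s \<in> {1..k} \<Longrightarrow> c ! s \<le> Max ((\<lambda>r. c ! r) ` {0..<s}) + 1"
    using assms unfolding Gamma_def closed_walk_def by auto
  then have "1 \<in> set c"
    by (metis nth_mem zero_less_Suc)
  then show "t \<ge> 1"
    using \<open>set c = {1..t}\<close> by auto
qed

lemma Gamma_visits_smaller:
  assumes "c \<in> Gamma k t"
  shows "s \<le> k \<Longrightarrow> 1 \<le> v \<Longrightarrow> v \<le> c ! s \<Longrightarrow> \<exists>r\<le>s. c ! r = v"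
proof (induction s arbitrary: v rule: less_induct)
  case (less s)
  show ?case
  proof (cases "s = 0")
    case True
    then show ?thesis
      using less.prems Gamma_D(2)[OF assms] by auto
  next
    case False
    define m where "m = Max ((\<lambda>r. c ! r) ` {0..<s})"
    have "m \<in> (\<lambda>r. c ! r) ` {0..<s}"
      unfolding m_def using False by (intro Max_in) auto
    then obtain r0 where r0: "r0 < s" "c ! r0 = m"
      by auto
    have "c ! s \<le> m + 1"
      unfolding m_def using Gamma_D(6)[OF assms, of s] False less.prems by auto
    show ?thesis
    proof (cases "v \<le> m")
      case True
      then obtain r where "r \<le> r0" "c ! r = v"
        using less.IH[of r0 v] r0 less.prems by auto
      then show ?thesis
        using r0 by (intro exI[of _ r]) auto
    next
      case False
      then show ?thesis
        using \<open>c ! s \<le> m + 1\<close> less.prems by (intro exI[of _ s]) auto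
    qed
  qed
qed

lemma first_visit_Gamma:
  assumes "c \<in> Gamma k t" and "v \<in> {1..t}"
  shows "first_visit c v \<le> k" "c ! first_visit c v = v" "\<And>r. r < first_visit c v \<Longrightarrow> c ! r \<noteq> v"
proof -
  have "v \<in> set c"
    using assms Gamma_D(4) by auto
  then obtain s where s: "s < length c" "c ! s = v"
    by (auto simp: in_set_conv_nth)
  show "c ! first_visit c v = v"
    unfolding first_visit_def using s(2) by (rule LeastI)
  have "first_visit c v \<le> s"
    unfolding first_visit_def using s(2) by (rule Least_le)
  then show "first_visit c v \<le> k"
    using s Gamma_D(1)[OF assms(1)] by auto
  show "\<And>r. r < first_visit c v \<Longrightarrow> c ! r \<noteq> v"
    unfolding first_visit_def by (rule not_less_Least)
qed

lemma walk_parent_Gamma: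
  assumes cG: "c \<in> Gamma k t" and v: "v \<in> {2..t}"
  shows "first_visit c v \<in> {1..k}" "walk_parent c v \<in> {1..t}" "walk_parent c v < v"
    "walk_edge c (first_visit c v) = (walk_parent c v, v)"
proof -
  have "v \<in> {1..t}"
    using v by simp
  note first = first_visit_Gamma[OF cG this]
  have "first_visit c v \<noteq> 0"
  proof
    assume "first_visit c v = 0"
    then have "v = 1"
      using first(2) Gamma_D(2)[OF cG] v by simp
    then show False
      using v by simp
  qed
  then show fv: "first_visit c v \<in> {1..k}"
    using first(1) v by auto
  have "walk_parent c v \<in> set c"
    unfolding walk_parent_def using fv Gamma_D(1)[OF cG] by auto
  then show "walk_parent c v \<in> {1..t}"
    using Gamma_D(4)[OF cG] by auto
  show less: "walk_parent c v < v"
  proof (rule ccontr)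
    assume "\<not> walk_parent c v < v"
    then obtain r where "r \<le> first_visit c v - 1" "c ! r = v"
      using Gamma_visits_smaller[OF cG, of "first_visit c v - 1" v] fv v
      unfolding walk_parent_def by fastforce
    then have "r < first_visit c v"
      using fv by auto
    then show False
      using first(3) \<open>c ! r = v\<close> by blast
  qed
  show "walk_edge c (first_visit c v) = (walk_parent c v, v)"
    unfolding walk_edge_def using less first(2) v by (simp add: walk_parent_def)
qed

lemma walk_edge_eq_iff:
  "walk_edge i s = walk_edge i r \<longleftrightarrow>
     (i ! (s - 1) = i ! (r - 1) \<and> i ! s = i ! r) \<or> (i ! (s - 1) = i ! r \<and> i ! s = i ! (r - 1))"
  unfolding walk_edge_def by (auto simp: min_def max_def)

lemma walk_edge_iso:
  assumes "walk_iso i c" "length c = Suc k" "s \<in> {1..k}" "r \<in> {1..k}"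
  shows "walk_edge i s = walk_edge i r \<longleftrightarrow> walk_edge c s = walk_edge c r"
proof -
  have "i ! x = i ! y \<longleftrightarrow> c ! x = c ! y" if "x < Suc k" "y < Suc k" for x y
    using assms(1,2) that unfolding walk_iso_def by auto
  then show ?thesis
    unfolding walk_edge_eq_iff using assms(3,4) by auto
qed

lemma edge_steps_iso:
  assumes "walk_iso i c" "length c = Suc k" "s \<in> {1..k}"
  shows "edge_steps i k (walk_edge i s) = edge_steps c k (walk_edge c s)"
  using walk_edge_iso[OF assms(1,2) _ assms(3)] by auto

lemma edge_mult_iso:
  assumes "walk_iso i c" "length c = Suc k" "s \<in> {1..k}"
  shows "edge_mult i k (walk_edge i s) = edge_mult c k (walk_edge c s)"
  unfolding edge_mult_def edge_steps_iso[OF assms] ..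

lemma edge_mult_ge_2:
  assumes "every_edge_repeated k c" and s: "s \<in> {1..k}"
  shows "edge_mult c k (walk_edge c s) \<ge> 2"
proof -
  obtain r where r: "r \<in> {1..k}" "r \<noteq> s" "{c ! (s - 1), c ! s} = {c ! (r - 1), c ! r}"
    using assms by blast
  then have "walk_edge c r = walk_edge c s"
    unfolding walk_edge_eq_iff by (auto simp: doubleton_eq_iff)
  then have "{s, r} \<subseteq> edge_steps c k (walk_edge c s)"
    using r s by auto
  then have "card {s, r} \<le> edge_mult c k (walk_edge c s)"
    unfolding edge_mult_def by (intro card_mono) auto
  then show ?thesis
    using r by simp
qed

lemma sum_edge_mult: "(\<Sum>p\<in>walk_edge i ` {1..k}. edge_mult i k p) = k"
  unfolding edge_mult_def using sum.group[of "{1..k}" "walk_edge i ` {1..k}" "walk_edge i" "\<lambda>_. 1::nat"]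
  by simp

lemma tree_edges:
  assumes cG: "c \<in> Gamma k t" and iso: "walk_iso i c"
  shows "inj_on (\<lambda>v. walk_edge i (first_visit c v)) {2..t}"
    "(\<lambda>v. walk_edge i (first_visit c v)) ` {2..t} \<subseteq> walk_edge i ` {1..k}"
proof -
  show "inj_on (\<lambda>v. walk_edge i (first_visit c v)) {2..t}"
  proof (rule inj_onI)
    fix v w
    assume vw: "v \<in> {2..t}" "w \<in> {2..t}" "walk_edge i (first_visit c v) = walk_edge i (first_visit c w)"
    then have "walk_edge c (first_visit c v) = walk_edge c (first_visit c w)"
      using walk_edge_iso[OF iso Gamma_D(1)[OF cG]] walk_parent_Gamma(1)[OF cG] by auto
    then show "v = w"
      using walk_parent_Gamma(4)[OF cG vw(1)] walk_parent_Gamma(4)[OF cG vw(2)] by simp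
  qed
  show "(\<lambda>v. walk_edge i (first_visit c v)) ` {2..t} \<subseteq> walk_edge i ` {1..k}"
    using walk_parent_Gamma(1)[OF cG] by auto
qed

lemma card_walk_edges:
  assumes cG: "c \<in> Gamma k t" and iso: "walk_iso i c" and "every_edge_repeated k c"
  shows "t - 1 \<le> card (walk_edge i ` {1..k})" "2 * card (walk_edge i ` {1..k}) \<le> k"
    "\<And>p. p \<in> walk_edge i ` {1..k} \<Longrightarrow> edge_mult i k p \<ge> 2"
proof -
  have "card ((\<lambda>v. walk_edge i (first_visit c v)) ` {2..t}) \<le> card (walk_edge i ` {1..k})"
    by (intro card_mono tree_edges(2)[OF cG iso]) auto
  then show "t - 1 \<le> card (walk_edge i ` {1..k})"
    using card_image[OF tree_edges(1)[OF cG iso]] by simp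
  show mult_ge_2: "\<And>p. p \<in> walk_edge i ` {1..k} \<Longrightarrow> edge_mult i k p \<ge> 2"
    using edge_mult_iso[OF iso Gamma_D(1)[OF cG]] edge_mult_ge_2[OF assms(3)] by auto
  have "(\<Sum>p\<in>walk_edge i ` {1..k}. 2) \<le> (\<Sum>p\<in>walk_edge i ` {1..k}. edge_mult i k p)"
    by (intro sum_mono mult_ge_2)
  then show "2 * card (walk_edge i ` {1..k}) \<le> k"
    using sum_edge_mult[of i k] by (simp add: mult.commute)
qed

lemma Gamma_vertex_bound:
  assumes "c \<in> Gamma k t" and "every_edge_repeated k c"
  shows "2 * (t - 1) \<le> k"
proof -
  have "walk_iso c c"
    unfolding walk_iso_def by auto
  from card_walk_edges(1,2)[OF assms(1) this assms(2)] show ?thesis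
    by linarith
qed

lemma tight_walk_edges:
  assumes cG: "c \<in> Gamma k t" and "every_edge_repeated k c" and "k = 2 * (t - 1)"
  shows "walk_edge c ` {1..k} = (\<lambda>v. walk_edge c (first_visit c v)) ` {2..t}"
    "\<And>s. s \<in> {1..k} \<Longrightarrow> edge_mult c k (walk_edge c s) = 2"
proof -
  have iso: "walk_iso c c"
    unfolding walk_iso_def by auto
  note edges = card_walk_edges[OF cG iso assms(2)]
  have card_edges: "card (walk_edge c ` {1..k}) = t - 1"
    using edges(1,2) assms(3) by linarith
  show "walk_edge c ` {1..k} = (\<lambda>v. walk_edge c (first_visit c v)) ` {2..t}"
    using card_subset_eq[OF _ tree_edges(2)[OF cG iso]] card_image[OF tree_edges(1)[OF cG iso]] card_edges
    by auto
  have "(\<Sum>p\<in>walk_edge c ` {1..k}. edge_mult c k p - 2)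
      = (\<Sum>p\<in>walk_edge c ` {1..k}. edge_mult c k p) - (\<Sum>p\<in>walk_edge c ` {1..k}. 2)"
    by (rule sum_subtractf_nat) (use edges(3) in auto)
  also have "\<dots> = 0"
    using sum_edge_mult[of c k] card_edges assms(3) by simp
  finally have "(\<Sum>p\<in>walk_edge c ` {1..k}. edge_mult c k p - 2) = 0" .
  then have "\<forall>p\<in>walk_edge c ` {1..k}. edge_mult c k p - 2 = 0"
    by simp
  then show "edge_mult c k (walk_edge c s) = 2" if "s \<in> {1..k}" for s
  proof -
    have "edge_mult c k (walk_edge c s) - 2 = 0" "edge_mult c k (walk_edge c s) \<ge> 2"
      using \<open>\<forall>p\<in>walk_edge c ` {1..k}. edge_mult c k p - 2 = 0\<close> edges(3) that by auto
    then show ?thesis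
      by linarith
  qed
qed

lemma tight_walk_edges_iso:
  assumes cG: "c \<in> Gamma k t" and "every_edge_repeated k c" and "k = 2 * (t - 1)" and iso: "walk_iso i c"
  shows "walk_edge i ` {1..k} = (\<lambda>v. walk_edge i (first_visit c v)) ` {2..t}"
proof
  show "walk_edge i ` {1..k} \<subseteq> (\<lambda>v. walk_edge i (first_visit c v)) ` {2..t}"
  proof (rule image_subsetI)
    fix s assume s: "s \<in> {1..k}"
    then obtain v where v: "v \<in> {2..t}" "walk_edge c s = walk_edge c (first_visit c v)"
      using tight_walk_edges(1)[OF assms(1-3)] by blast
    then have "walk_edge i s = walk_edge i (first_visit c v)"
      using walk_edge_iso[OF iso Gamma_D(1)[OF cG] s walk_parent_Gamma(1)[OF cG v(1)]] by simp
    then show "walk_edge i s \<in> (\<lambda>v. walk_edge i (first_visit c v)) ` {2..t}"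
      using v(1) by blast
  qed
qed (rule tree_edges(2)[OF cG iso])

lemma walk_parent_1:
  assumes "c \<in> Gamma k t"
  shows "walk_parent c 1 = 1"
proof -
  have "first_visit c 1 = 0"
    unfolding first_visit_def using Gamma_D(2)[OF assms] by (intro Least_equality) auto
  then show ?thesis
    unfolding walk_parent_def using Gamma_D(2)[OF assms] by simp
qed

lemma funpow_walk_parent:
  assumes cG: "c \<in> Gamma k t" and "u \<in> {1..t}"
  shows "(walk_parent c ^^ j) u \<in> {1..t} \<and> (walk_parent c ^^ j) u \<le> u"
proof (induction j)
  case 0
  then show ?case
    using assms(2) by simp
next
  case (Suc j)
  define w where "w = (walk_parent c ^^ j) u"
  have "w \<in> {1..t}" "w \<le> u"
    using Suc unfolding w_def by auto
  moreover have "walk_parent c w \<in> {1..t} \<and> walk_parent c w \<le> w"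
    using \<open>w \<in> {1..t}\<close> walk_parent_1[OF cG] walk_parent_Gamma(2,3)[OF cG, of w]
    by (cases "w = 1") auto
  ultimately show ?case
    unfolding w_def by auto
qed

definition walk_subtree :: "nat list \<Rightarrow> nat \<Rightarrow> nat set" where
  "walk_subtree c v = {u. \<exists>j. (walk_parent c ^^ j) u = v}"

lemma walk_subtree_Gamma:
  assumes cG: "c \<in> Gamma k t" and v: "v \<in> {2..t}"
  shows "v \<in> walk_subtree c v" "walk_parent c v \<notin> walk_subtree c v"
    and "\<And>u. u \<in> {2..t} \<Longrightarrow> u \<noteq> v \<Longrightarrow> walk_parent c u \<in> walk_subtree c v \<longleftrightarrow> u \<in> walk_subtree c v"
proof -
  show "v \<in> walk_subtree c v"
    unfolding walk_subtree_def by (auto intro: exI[of _ 0])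
  show "walk_parent c v \<notin> walk_subtree c v"
  proof
    assume "walk_parent c v \<in> walk_subtree c v"
    then obtain j where "(walk_parent c ^^ j) (walk_parent c v) = v"
      unfolding walk_subtree_def by auto
    moreover have "(walk_parent c ^^ j) (walk_parent c v) \<le> walk_parent c v"
      using funpow_walk_parent[OF cG walk_parent_Gamma(2)[OF cG v]] by auto
    ultimately show False
      using walk_parent_Gamma(3)[OF cG v] by simp
  qed
  fix u assume u: "u \<in> {2..t}" "u \<noteq> v"
  show "walk_parent c u \<in> walk_subtree c v \<longleftrightarrow> u \<in> walk_subtree c v"
  proof
    assume "walk_parent c u \<in> walk_subtree c v"
    then obtain j where "(walk_parent c ^^ j) (walk_parent c u) = v"
      unfolding walk_subtree_def by auto
    then have "(walk_parent c ^^ Suc j) u = v"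
      by (simp only: funpow_Suc_right comp_def)
    then show "u \<in> walk_subtree c v"
      unfolding walk_subtree_def by blast
  next
    assume "u \<in> walk_subtree c v"
    then obtain j where j: "(walk_parent c ^^ j) u = v"
      unfolding walk_subtree_def by auto
    with u obtain j' where "j = Suc j'"
      by (cases j) auto
    then have "(walk_parent c ^^ j') (walk_parent c u) = v"
      using j by (simp only: funpow_Suc_right comp_def)
    then show "walk_parent c u \<in> walk_subtree c v"
      unfolding walk_subtree_def by blast
  qed
qed

lemma tight_edge_steps_eq:
  assumes cG: "c \<in> Gamma k t" and "every_edge_repeated k c" and "k = 2 * (t - 1)"
    and v: "v \<in> {2..t}" and r: "r \<in> {1..k}" "r \<noteq> first_visit c v"
    and "walk_edge c r = walk_edge c (first_visit c v)"
  shows "edge_steps c k (walk_edge c (first_visit c v)) = {first_visit c v, r}"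
proof (rule card_subset_eq[symmetric])
  have "first_visit c v \<in> {1..k}"
    by (rule walk_parent_Gamma(1)[OF cG v])
  then show "{first_visit c v, r} \<subseteq> edge_steps c k (walk_edge c (first_visit c v))"
    using assms(7) r by auto
  show "card {first_visit c v, r} = card (edge_steps c k (walk_edge c (first_visit c v)))"
    using tight_walk_edges(2)[OF assms(1-3) \<open>first_visit c v \<in> {1..k}\<close>] r
    unfolding edge_mult_def by auto
qed simp

lemma tight_walk_return_step:
  assumes cG: "c \<in> Gamma k t" and rep: "every_edge_repeated k c" and kt: "k = 2 * (t - 1)"
    and v: "v \<in> {2..t}" and r: "r \<in> {1..k}" "r \<noteq> first_visit c v"
    and same_edge: "walk_edge c r = walk_edge c (first_visit c v)"
  shows "c ! (r - 1) = v \<and> c ! r = walk_parent c v"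
proof -
  txt \<open>In the tight case the only steps crossing the boundary of the subtree \<open>S\<close> below \<open>v\<close> are
    the two traversals of the edge into \<open>v\<close>. The closed walk enters \<open>S\<close> as often as it leaves it,
    and the first traversal enters, so the second one leaves.\<close>
  define S where "S = walk_subtree c v"
  note S = walk_subtree_Gamma[OF cG v, folded S_def]
  note pv = walk_parent_Gamma[OF cG v]
  define g where "g s = (if c ! s \<in> S then 1 else 0) - (if c ! (s - 1) \<in> S then 1 else (0::int))" for s
  have "(\<Sum>s\<in>{1..k}. g s) = 0"
    using sum_telescope''[of 0 k "\<lambda>s. if c ! s \<in> S then 1 else (0::int)"] Gamma_D(2,3)[OF cG]
    unfolding g_def by simp
  have steps: "edge_steps c k (walk_edge c (first_visit c v)) = {first_visit c v, r}"
    by (rule tight_edge_steps_eq[OF assms])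
  have g_zero: "g s = 0" if s: "s \<in> {1..k} - {first_visit c v, r}" for s
  proof -
    obtain u where u: "u \<in> {2..t}" "walk_edge c s = walk_edge c (first_visit c u)"
      using tight_walk_edges(1)[OF cG rep kt] s by blast
    then have "u \<noteq> v"
      using s steps by auto
    have "walk_edge c s = (walk_parent c u, u)"
      using u walk_parent_Gamma(4)[OF cG u(1)] by simp
    then have "(c ! (s - 1) = walk_parent c u \<and> c ! s = u) \<or> (c ! (s - 1) = u \<and> c ! s = walk_parent c u)"
      using walk_parent_Gamma(3)[OF cG u(1)] unfolding walk_edge_def by (auto simp: min_def max_def split: if_splits)
    then show ?thesis
      unfolding g_def using S(3)[OF u(1) \<open>u \<noteq> v\<close>] by auto
  qed
  have "(\<Sum>s\<in>{1..k}. g s) = (\<Sum>s\<in>{first_visit c v, r}. g s)"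
    by (rule sum.mono_neutral_right) (use pv(1) r g_zero in auto)
  then have "g (first_visit c v) + g r = 0"
    using \<open>(\<Sum>s\<in>{1..k}. g s) = 0\<close> r by simp
  moreover have "g (first_visit c v) = 1"
    unfolding g_def using S(1,2) first_visit_Gamma(2)[OF cG, of v] v by (simp add: walk_parent_def)
  ultimately have "c ! (r - 1) \<in> S" "c ! r \<notin> S"
    unfolding g_def by (auto split: if_splits)
  moreover have "(c ! (r - 1) = walk_parent c v \<and> c ! r = v) \<or> (c ! (r - 1) = v \<and> c ! r = walk_parent c v)"
    using same_edge pv(3,4) unfolding walk_edge_def by (auto simp: min_def max_def split: if_splits)
  ultimately show ?thesis
    using S(1,2) by auto
qed

lemma tight_edge_steps:
  assumes cG: "c \<in> Gamma k t" and "every_edge_repeated k c" and "k = 2 * (t - 1)" and v: "v \<in> {2..t}"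
  obtains r where "r \<in> {1..k}" "r \<noteq> first_visit c v"
    "edge_steps c k (walk_edge c (first_visit c v)) = {first_visit c v, r}"
    "c ! (r - 1) = v" "c ! r = walk_parent c v"
proof -
  define A where "A = edge_steps c k (walk_edge c (first_visit c v))"
  have "first_visit c v \<in> A"
    unfolding A_def using walk_parent_Gamma(1)[OF cG v] by simp
  moreover have "card A = 2"
    unfolding A_def using tight_walk_edges(2)[OF assms(1-3) walk_parent_Gamma(1)[OF cG v]]
    by (simp add: edge_mult_def)
  ultimately have "card (A - {first_visit c v}) = 1"
    by simp
  then obtain r where "A - {first_visit c v} = {r}"
    by (auto simp: card_Suc_eq)
  then have r: "r \<in> {1..k}" "r \<noteq> first_visit c v" "walk_edge c r = walk_edge c (first_visit c v)"
    unfolding A_def by auto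
  show ?thesis
    by (rule that[OF r(1,2) tight_edge_steps_eq[OF assms r]])
      (use tight_walk_return_step[OF assms r] in auto)
qed

lemma Lwalks_D:
  assumes "i \<in> Lwalks n k c"
  shows "length i = Suc k" "set i \<subseteq> {1..n}" "walk_iso i c"
  using assms unfolding Lwalks_def closed_walk_def by auto

lemma map_labeling_Lwalks:
  assumes cG: "c \<in> Gamma k t" and \<phi>: "\<phi> \<in> labelings t n" "inj_on \<phi> {1..t}"
  shows "map \<phi> c \<in> Lwalks n k c"
proof -
  note G = Gamma_D[OF cG]
  have "set (map \<phi> c) \<subseteq> {1..n}"
    using \<phi>(1) G(4) by (auto simp: PiE_iff)
  moreover have "map \<phi> c ! s = map \<phi> c ! r \<longleftrightarrow> c ! s = c ! r" if "s < Suc k" "r < Suc k" for s r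
  proof -
    have "c ! s \<in> {1..t}" "c ! r \<in> {1..t}"
      using that G(1,4) by (metis nth_mem)+
    then show ?thesis
      using that G(1) inj_on_eq_iff[OF \<phi>(2)] by simp
  qed
  ultimately show ?thesis
    unfolding Lwalks_def closed_walk_def walk_iso_def using G(1-3) by simp
qed

lemma Lwalks_labeling:
  assumes cG: "c \<in> Gamma k t" and "i \<in> Lwalks n k c"
  obtains \<phi> where "\<phi> \<in> labelings t n" "inj_on \<phi> {1..t}" "i = map \<phi> c"
proof -
  note G = Gamma_D[OF cG]
  note i = Lwalks_D[OF \<open>i \<in> Lwalks n k c\<close>]
  have iso: "i ! x = i ! y \<longleftrightarrow> c ! x = c ! y" if "x < Suc k" "y < Suc k" for x y
    using i that unfolding walk_iso_def by auto
  have first: "first_visit c v < Suc k" "c ! first_visit c v = v" if "v \<in> {1..t}" for v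
    using first_visit_Gamma[OF cG that] by auto
  define \<phi> where "\<phi> = restrict (\<lambda>v. i ! first_visit c v) {1..t}"
  have "\<phi> \<in> labelings t n"
    unfolding \<phi>_def using first(1) i(1,2) by (auto simp: nth_mem subset_eq)
  moreover have "inj_on \<phi> {1..t}"
    unfolding \<phi>_def using iso first by (intro inj_onI) (metis restrict_apply')
  moreover have "i = map \<phi> c"
  proof (rule nth_equalityI)
    fix s assume "s < length i"
    then have s: "s < Suc k" "c ! s \<in> {1..t}"
      using G(1,4) i(1) by (auto simp: nth_mem)
    then show "i ! s = map \<phi> c ! s"
      unfolding \<phi>_def using iso[OF first(1)[OF s(2)] s(1)] first(2)[OF s(2)] G(1) by simp
  qed (use G(1) i(1) in simp)
  ultimately show ?thesis
    by (rule that)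
qed

lemma bij_betw_labelings_Lwalks:
  assumes cG: "c \<in> Gamma k t"
  shows "bij_betw (\<lambda>\<phi>. map \<phi> c) {\<phi> \<in> labelings t n. inj_on \<phi> {1..t}} (Lwalks n k c)"
proof (rule bij_betw_imageI)
  show "inj_on (\<lambda>\<phi>. map \<phi> c) {\<phi> \<in> labelings t n. inj_on \<phi> {1..t}}"
  proof (rule inj_onI)
    fix \<phi> \<psi>
    assume "\<phi> \<in> {\<phi> \<in> labelings t n. inj_on \<phi> {1..t}}" "\<psi> \<in> {\<phi> \<in> labelings t n. inj_on \<phi> {1..t}}"
      and "map \<phi> c = map \<psi> c"
    then show "\<phi> = \<psi>"
      using Gamma_D(4)[OF cG] by (intro PiE_ext[of \<phi> "{1..t}" "\<lambda>_. {1..n}"]) (auto simp: map_eq_conv)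
  qed
  show "(\<lambda>\<phi>. map \<phi> c) ` {\<phi> \<in> labelings t n. inj_on \<phi> {1..t}} = Lwalks n k c"
    using map_labeling_Lwalks[OF cG] Lwalks_labeling[OF cG] by blast
qed

lemma sum_Lwalks:
  assumes "c \<in> Gamma k t"
  shows "(\<Sum>i\<in>Lwalks n k c. f i) = (\<Sum>\<phi>\<in>{\<phi> \<in> labelings t n. inj_on \<phi> {1..t}}. f (map \<phi> c))"
  using sum.reindex_bij_betw[OF bij_betw_labelings_Lwalks[OF assms], of f] by simp

lemma nth_map_first_visit:
  assumes "c \<in> Gamma k t" and "v \<in> {2..t}"
  shows "map \<phi> c ! (first_visit c v - 1) = \<phi> (walk_parent c v)" "map \<phi> c ! first_visit c v = \<phi> v"
  using walk_parent_Gamma(1)[OF assms] first_visit_Gamma(2)[OF assms(1), of v] assms(2) Gamma_D(1)[OF assms(1)]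
  by (auto simp: walk_parent_def)

section \<open>Moments of a bounded random Hermitian matrix\<close>

lemma borel_measurable_cnj [measurable]: "cnj \<in> borel_measurable borel"
  by (intro borel_measurable_continuous_onI continuous_intros)

lemma cvar_nonneg: "cvar M X \<ge> 0"
  unfolding cvar_def by simp

definition step_orient :: "nat list \<Rightarrow> nat \<Rightarrow> complex \<Rightarrow> complex" where
  "step_orient i s z = (if i ! (s - 1) \<le> i ! s then z else cnj z)"

locale wigner_model =
  fixes M :: "'a measure" and W :: "nat \<Rightarrow> nat \<Rightarrow> 'a \<Rightarrow> complex" and n :: nat and e :: real
  assumes prob_space: "prob_space M"
    and hermitian: "\<And>i j x. i \<in> {1..n} \<Longrightarrow> j \<in> {1..n} \<Longrightarrow> x \<in> space M \<Longrightarrow> W j i x = cnj (W i j x)"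
    and indep: "prob_space.indep_vars M (\<lambda>_. borel) (\<lambda>p. W (fst p) (snd p)) {(i, j). 1 \<le> i \<and> i \<le> j \<and> j \<le> n}"
    and mean_zero: "\<And>i j. i \<in> {1..n} \<Longrightarrow> j \<in> {1..n} \<Longrightarrow> integral\<^sup>L M (W i j) = 0"
    and bounded: "\<And>i j x. i \<in> {1..n} \<Longrightarrow> j \<in> {1..n} \<Longrightarrow> x \<in> space M \<Longrightarrow> cmod (W i j x) \<le> e"
begin

sublocale P: prob_space M
  by (rule prob_space)

lemma W_measurable:
  assumes "a \<in> {1..n}" "b \<in> {1..n}"
  shows "W a b \<in> borel_measurable M"
proof -
  have upper: "W a b \<in> borel_measurable M" if "a \<in> {1..n}" "b \<in> {1..n}" "a \<le> b" for a b
    using P.indep_vars_def[THEN iffD1, OF indep] that by auto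
  show ?thesis
  proof (cases "a \<le> b")
    case False
    have "(\<lambda>x. cnj (W b a x)) \<in> borel_measurable M"
      using upper[of b a] assms False by simp
    moreover have "W a b \<in> borel_measurable M \<longleftrightarrow> (\<lambda>x. cnj (W b a x)) \<in> borel_measurable M"
      using hermitian[of b a] assms by (intro measurable_cong) auto
    ultimately show ?thesis
      by simp
  qed (use upper assms in auto)
qed

lemma cvar_W:
  assumes "a \<in> {1..n}" "b \<in> {1..n}"
  shows "cvar M (W a b) = integral\<^sup>L M (\<lambda>x. (cmod (W a b x))\<^sup>2)"
  unfolding cvar_def using mean_zero[OF assms] by simp

lemma cvar_W_commute:
  assumes "a \<in> {1..n}" "b \<in> {1..n}"
  shows "cvar M (W b a) = cvar M (W a b)"
  unfolding cvar_W[OF assms] cvar_W[OF assms(2,1)]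
  using hermitian[OF assms] by (intro Bochner_Integration.integral_cong) auto

lemma integrable_power_norm_W:
  assumes "a \<in> {1..n}" "b \<in> {1..n}"
  shows "integrable M (\<lambda>x. cmod (W a b x) ^ j)"
proof (rule P.integrable_const_bound[where B="e ^ j"])
  show "AE x in M. norm (cmod (W a b x) ^ j) \<le> e ^ j"
    using bounded[OF assms] by (auto intro!: power_mono)
  show "(\<lambda>x. cmod (W a b x) ^ j) \<in> borel_measurable M"
    using W_measurable[OF assms] by measurable
qed

lemma cvar_W_le:
  assumes "a \<in> {1..n}" "b \<in> {1..n}"
  shows "cvar M (W a b) \<le> e\<^sup>2"
proof -
  have "integral\<^sup>L M (\<lambda>x. (cmod (W a b x))\<^sup>2) \<le> integral\<^sup>L M (\<lambda>x. e\<^sup>2)"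
    using integrable_power_norm_W[OF assms] bounded[OF assms]
    by (intro integral_mono) (auto intro!: power_mono)
  then show ?thesis
    unfolding cvar_W[OF assms] by (simp add: P.prob_space)
qed

lemma W_step:
  assumes "i ! (s - 1) \<in> {1..n}" "i ! s \<in> {1..n}" "x \<in> space M"
  shows "W (i ! (s - 1)) (i ! s) x = step_orient i s (W (fst (walk_edge i s)) (snd (walk_edge i s)) x)"
  using hermitian[OF assms(2,1,3)]
  unfolding step_orient_def walk_edge_def by (simp add: min_def max_def)

lemma integral_walk_factor:
  assumes len: "length i = Suc k" and set_i: "set i \<subseteq> {1..n}"
  shows "integral\<^sup>L M (\<lambda>x. \<Prod>s\<in>{1..k}. W (i ! (s - 1)) (i ! s) x) =
    (\<Prod>p\<in>walk_edge i ` {1..k}. integral\<^sup>L M (\<lambda>x. \<Prod>s\<in>edge_steps i k p. W (i ! (s - 1)) (i ! s) x))"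
proof -
  txt \<open>Each edge factor is a function of the single upper-triangular entry indexed by the edge,
    so independence of these entries factors the expectation.\<close>
  have ends: "i ! (s - 1) \<in> {1..n}" "i ! s \<in> {1..n}" if "s \<in> {1..k}" for s
    using that len set_i by (auto simp: subset_eq)
  define E where "E = walk_edge i ` {1..k}"
  define h where "h p z = (\<Prod>s\<in>edge_steps i k p. step_orient i s z)" for p z
  define Y where "Y p x = h p (W (fst p) (snd p) x)" for p x
  have E_upper: "E \<subseteq> {(i, j). 1 \<le> i \<and> i \<le> j \<and> j \<le> n}"
    unfolding E_def walk_edge_def using ends by auto
  have factor_Y: "(\<Prod>s\<in>edge_steps i k p. W (i ! (s - 1)) (i ! s) x) = Y p x" if "x \<in> space M" for p x
    unfolding Y_def h_def using W_step[OF ends that] by (intro prod.cong) auto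
  have indep_Y: "P.indep_vars (\<lambda>_. borel) Y E"
    unfolding Y_def
    by (rule P.indep_vars_compose2[where X="\<lambda>p. W (fst p) (snd p)", OF P.indep_vars_subset[OF indep E_upper]])
      (auto simp: h_def step_orient_def intro!: borel_measurable_prod)
  have integrable_Y: "integrable M (Y p)" if "p \<in> E" for p
  proof (rule P.integrable_const_bound[where B="e ^ card (edge_steps i k p)"])
    show "Y p \<in> borel_measurable M"
      using indep_Y that unfolding P.indep_vars_def by blast
    have "fst p \<in> {1..n}" "snd p \<in> {1..n}"
      using E_upper that by auto
    show "AE x in M. norm (Y p x) \<le> e ^ card (edge_steps i k p)"
    proof (rule AE_I2)
      fix x assume "x \<in> space M"
      then have "cmod (W (fst p) (snd p) x) \<le> e"
        using bounded \<open>fst p \<in> {1..n}\<close> \<open>snd p \<in> {1..n}\<close> by blast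
      moreover have "norm (step_orient i s z) = norm z" for s z
        by (simp add: step_orient_def)
      ultimately show "norm (Y p x) \<le> e ^ card (edge_steps i k p)"
        unfolding Y_def h_def prod_norm[symmetric] by (simp add: power_mono)
    qed
  qed
  have "integral\<^sup>L M (\<lambda>x. \<Prod>s\<in>{1..k}. W (i ! (s - 1)) (i ! s) x) = integral\<^sup>L M (\<lambda>x. \<Prod>p\<in>E. Y p x)"
  proof (rule Bochner_Integration.integral_cong[OF refl])
    fix x assume "x \<in> space M"
    have "(\<Prod>s\<in>{1..k}. W (i ! (s - 1)) (i ! s) x) = (\<Prod>p\<in>E. \<Prod>s\<in>edge_steps i k p. W (i ! (s - 1)) (i ! s) x)"
      unfolding E_def by (rule prod.group[symmetric]) auto
    then show "(\<Prod>s\<in>{1..k}. W (i ! (s - 1)) (i ! s) x) = (\<Prod>p\<in>E. Y p x)"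
      using factor_Y[OF \<open>x \<in> space M\<close>] by simp
  qed
  also have "\<dots> = (\<Prod>p\<in>E. integral\<^sup>L M (Y p))"
    using indep_Y integrable_Y unfolding E_def by (intro P.indep_vars_lebesgue_integral) auto
  also have "\<dots> = (\<Prod>p\<in>E. integral\<^sup>L M (\<lambda>x. \<Prod>s\<in>edge_steps i k p. W (i ! (s - 1)) (i ! s) x))"
    using factor_Y by (intro prod.cong Bochner_Integration.integral_cong) auto
  finally show ?thesis
    unfolding E_def .
qed

lemma cvar_walk_edge:
  assumes "i ! (s - 1) \<in> {1..n}" "i ! s \<in> {1..n}"
  shows "cvar M (W (fst (walk_edge i s)) (snd (walk_edge i s))) = cvar M (W (i ! (s - 1)) (i ! s))"
  using cvar_W_commute[OF assms] unfolding walk_edge_def by (simp add: min_def max_def)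

lemma norm_integral_edge_steps_le_moment:
  assumes len: "length i = Suc k" and set_i: "set i \<subseteq> {1..n}" and p: "p \<in> walk_edge i ` {1..k}"
  shows "fst p \<in> {1..n}" "snd p \<in> {1..n}"
    and "cmod (integral\<^sup>L M (\<lambda>x. \<Prod>s\<in>edge_steps i k p. W (i ! (s - 1)) (i ! s) x))
      \<le> integral\<^sup>L M (\<lambda>x. cmod (W (fst p) (snd p) x) ^ edge_mult i k p)"
proof -
  have ends: "i ! (s - 1) \<in> {1..n}" "i ! s \<in> {1..n}" if "s \<in> {1..k}" for s
    using that len set_i by (auto simp: subset_eq)
  then show "fst p \<in> {1..n}" "snd p \<in> {1..n}"
    using p unfolding walk_edge_def by (auto simp: min_def max_def)
  have "cmod (integral\<^sup>L M (\<lambda>x. \<Prod>s\<in>edge_steps i k p. W (i ! (s - 1)) (i ! s) x))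
      \<le> integral\<^sup>L M (\<lambda>x. cmod (\<Prod>s\<in>edge_steps i k p. W (i ! (s - 1)) (i ! s) x))"
    by (rule integral_norm_bound)
  also have "\<dots> = integral\<^sup>L M (\<lambda>x. cmod (W (fst p) (snd p) x) ^ edge_mult i k p)"
  proof (rule Bochner_Integration.integral_cong[OF refl])
    fix x assume "x \<in> space M"
    have "cmod (W (i ! (s - 1)) (i ! s) x) = cmod (W (fst p) (snd p) x)" if "s \<in> edge_steps i k p" for s
      using W_step[OF ends \<open>x \<in> space M\<close>, of s] that by (simp add: step_orient_def)
    then show "cmod (\<Prod>s\<in>edge_steps i k p. W (i ! (s - 1)) (i ! s) x)
        = cmod (W (fst p) (snd p) x) ^ edge_mult i k p"
      unfolding edge_mult_def prod_norm[symmetric] by simp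
  qed
  finally show "cmod (integral\<^sup>L M (\<lambda>x. \<Prod>s\<in>edge_steps i k p. W (i ! (s - 1)) (i ! s) x))
      \<le> integral\<^sup>L M (\<lambda>x. cmod (W (fst p) (snd p) x) ^ edge_mult i k p)" .
qed

lemma norm_integral_edge_steps_le:
  assumes "length i = Suc k" and "set i \<subseteq> {1..n}" and "p \<in> walk_edge i ` {1..k}"
  shows "cmod (integral\<^sup>L M (\<lambda>x. \<Prod>s\<in>edge_steps i k p. W (i ! (s - 1)) (i ! s) x)) \<le> e ^ edge_mult i k p"
proof -
  note p = norm_integral_edge_steps_le_moment[OF assms]
  have "integral\<^sup>L M (\<lambda>x. cmod (W (fst p) (snd p) x) ^ edge_mult i k p) \<le> integral\<^sup>L M (\<lambda>x. e ^ edge_mult i k p)"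
    using integrable_power_norm_W[OF p(1,2)] bounded[OF p(1,2)]
    by (intro integral_mono) (auto intro: power_mono)
  then show ?thesis
    using p(3) by (simp add: P.prob_space)
qed

lemma norm_integral_edge_steps_le_cvar:
  assumes "length i = Suc k" and "set i \<subseteq> {1..n}" and "p \<in> walk_edge i ` {1..k}"
    and "edge_mult i k p \<ge> 2"
  shows "cmod (integral\<^sup>L M (\<lambda>x. \<Prod>s\<in>edge_steps i k p. W (i ! (s - 1)) (i ! s) x))
    \<le> e ^ (edge_mult i k p - 2) * cvar M (W (fst p) (snd p))"
proof -
  note p = norm_integral_edge_steps_le_moment[OF assms(1-3)]
  define m where "m = edge_mult i k p"
  have m: "m = (m - 2) + 2"
    using assms(4) unfolding m_def by simp
  have "integral\<^sup>L M (\<lambda>x. cmod (W (fst p) (snd p) x) ^ m)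
      \<le> integral\<^sup>L M (\<lambda>x. e ^ (m - 2) * cmod (W (fst p) (snd p) x) ^ 2)"
  proof (rule integral_mono)
    fix x assume "x \<in> space M"
    then have "cmod (W (fst p) (snd p) x) ^ (m - 2) \<le> e ^ (m - 2)"
      using bounded[OF p(1,2)] by (intro power_mono) auto
    then have "cmod (W (fst p) (snd p) x) ^ (m - 2) * cmod (W (fst p) (snd p) x) ^ 2
        \<le> e ^ (m - 2) * cmod (W (fst p) (snd p) x) ^ 2"
      by (rule mult_right_mono) simp
    then show "cmod (W (fst p) (snd p) x) ^ m \<le> e ^ (m - 2) * cmod (W (fst p) (snd p) x) ^ 2"
      using m by (metis power_add)
  qed (use integrable_power_norm_W[OF p(1,2)] in auto)
  also have "\<dots> = e ^ (m - 2) * cvar M (W (fst p) (snd p))"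
    using cvar_W[OF p(1,2)] by simp
  finally show ?thesis
    using p(3) unfolding m_def by simp
qed

lemma integral_edge_steps_back_forth:
  assumes len: "length i = Suc k" and set_i: "set i \<subseteq> {1..n}"
    and s: "s \<in> {1..k}" "r \<in> {1..k}" "s \<noteq> r"
    and steps: "edge_steps i k (walk_edge i s) = {s, r}"
    and reversed: "i ! (r - 1) = i ! s" "i ! r = i ! (s - 1)"
  shows "integral\<^sup>L M (\<lambda>x. \<Prod>s'\<in>edge_steps i k (walk_edge i s). W (i ! (s' - 1)) (i ! s') x)
    = complex_of_real (cvar M (W (i ! (s - 1)) (i ! s)))"
proof -
  define a b where "a = i ! (s - 1)" and "b = i ! s"
  have ab: "a \<in> {1..n}" "b \<in> {1..n}"
    unfolding a_def b_def using s len set_i by (auto simp: subset_eq)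
  have "integral\<^sup>L M (\<lambda>x. \<Prod>s'\<in>edge_steps i k (walk_edge i s). W (i ! (s' - 1)) (i ! s') x)
      = integral\<^sup>L M (\<lambda>x. complex_of_real ((cmod (W a b x))\<^sup>2))"
  proof (rule Bochner_Integration.integral_cong[OF refl])
    fix x assume "x \<in> space M"
    have "(\<Prod>s'\<in>edge_steps i k (walk_edge i s). W (i ! (s' - 1)) (i ! s') x) = W a b x * cnj (W a b x)"
      unfolding steps using s(3) reversed hermitian[OF ab \<open>x \<in> space M\<close>] by (simp add: a_def b_def)
    then show "(\<Prod>s'\<in>edge_steps i k (walk_edge i s). W (i ! (s' - 1)) (i ! s') x)
        = complex_of_real ((cmod (W a b x))\<^sup>2)"
      using complex_norm_square[of "W a b x"] by (simp only: of_real_power)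
  qed
  also have "\<dots> = complex_of_real (cvar M (W a b))"
    by (simp only: cvar_W[OF ab] integral_complex_of_real)
  finally show ?thesis
    unfolding a_def b_def .
qed

lemma norm_integral_walk_le_tree_edges:
  assumes cG: "c \<in> Gamma k t" and rep: "every_edge_repeated k c" and "i \<in> Lwalks n k c" and "e > 0"
  shows "cmod (integral\<^sup>L M (\<lambda>x. \<Prod>s\<in>{1..k}. W (i ! (s - 1)) (i ! s) x))
    \<le> e ^ k * (\<Prod>v\<in>{2..t}. cvar M (W (fst (walk_edge i (first_visit c v))) (snd (walk_edge i (first_visit c v)))) / e\<^sup>2)"
proof -
  note i = Lwalks_D[OF \<open>i \<in> Lwalks n k c\<close>]
  define E where "E = walk_edge i ` {1..k}"
  define T where "T = (\<lambda>v. walk_edge i (first_visit c v)) ` {2..t}"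
  define G where "G p = integral\<^sup>L M (\<lambda>x. \<Prod>s\<in>edge_steps i k p. W (i ! (s - 1)) (i ! s) x)" for p
  define cv where "cv p = cvar M (W (fst p) (snd p))" for p
  txt \<open>Tree edges lose a factor \<open>e\<^sup>2\<close> against the variance; all other edges are bounded by \<open>e\<close>
    per traversal.\<close>
  define b where "b p = e ^ edge_mult i k p * (if p \<in> T then cv p / e\<^sup>2 else 1)" for p
  have "T \<subseteq> E" "inj_on (\<lambda>v. walk_edge i (first_visit c v)) {2..t}"
    unfolding T_def E_def using tree_edges[OF cG i(3)] by auto
  have G_le: "cmod (G p) \<le> b p" if "p \<in> E" for p
  proof (cases "p \<in> T")
    case True
    have "p \<in> walk_edge i ` {1..k}"
      using that unfolding E_def .
    moreover from this have mult: "edge_mult i k p \<ge> 2"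
      by (rule card_walk_edges(3)[OF cG i(3) rep])
    then have "e ^ edge_mult i k p = e ^ (edge_mult i k p - 2) * e\<^sup>2"
      by (metis le_add_diff_inverse2 power_add)
    ultimately show ?thesis
      using norm_integral_edge_steps_le_cvar[OF i(1,2) _ mult] True \<open>e > 0\<close>
      unfolding G_def b_def cv_def by simp
  next
    case False
    then show ?thesis
      using norm_integral_edge_steps_le[OF i(1,2)] that unfolding G_def b_def E_def by simp
  qed
  have "cmod (integral\<^sup>L M (\<lambda>x. \<Prod>s\<in>{1..k}. W (i ! (s - 1)) (i ! s) x)) = (\<Prod>p\<in>E. cmod (G p))"
    unfolding integral_walk_factor[OF i(1,2)] G_def E_def by (simp add: prod_norm)
  also have "\<dots> \<le> (\<Prod>p\<in>E. b p)"
    using G_le by (intro prod_mono) auto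
  also have "\<dots> = (\<Prod>p\<in>E. e ^ edge_mult i k p) * (\<Prod>p\<in>E. if p \<in> T then cv p / e\<^sup>2 else 1)"
    unfolding b_def by (rule prod.distrib)
  also have "(\<Prod>p\<in>E. e ^ edge_mult i k p) = e ^ k"
    unfolding E_def power_sum[symmetric] sum_edge_mult ..
  also have "(\<Prod>p\<in>E. if p \<in> T then cv p / e\<^sup>2 else 1) = (\<Prod>p\<in>T. cv p / e\<^sup>2)"
    using prod.inter_restrict[of E "\<lambda>p. cv p / e\<^sup>2" T] \<open>T \<subseteq> E\<close> unfolding E_def
    by (simp add: Int_absorb1)
  also have "\<dots> = (\<Prod>v\<in>{2..t}. cv (walk_edge i (first_visit c v)) / e\<^sup>2)"
    unfolding T_def by (rule prod.reindex[OF \<open>inj_on _ {2..t}\<close>, unfolded comp_def])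
  finally show ?thesis
    unfolding cv_def .
qed

lemma norm_integral_walk_le:
  assumes cG: "c \<in> Gamma k t" and rep: "every_edge_repeated k c"
    and \<phi>: "\<phi> \<in> labelings t n" "inj_on \<phi> {1..t}" and "e > 0"
  shows "cmod (integral\<^sup>L M (\<lambda>x. \<Prod>s\<in>{1..k}. W (map \<phi> c ! (s - 1)) (map \<phi> c ! s) x))
    \<le> e ^ (k - 2 * (t - 1)) * tree_weight (\<lambda>_ a b. cvar M (W a b)) (walk_parent c) t \<phi>"
proof -
  have tree_cvar: "cvar M (W (fst (walk_edge (map \<phi> c) (first_visit c v))) (snd (walk_edge (map \<phi> c) (first_visit c v))))
      = cvar M (W (\<phi> (walk_parent c v)) (\<phi> v))" if "v \<in> {2..t}" for v
  proof -
    have "\<phi> (walk_parent c v) \<in> {1..n}" "\<phi> v \<in> {1..n}"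
      using \<phi>(1) walk_parent_Gamma(2)[OF cG that] that by (auto simp: PiE_iff)
    then show ?thesis
      using cvar_walk_edge[of "map \<phi> c" "first_visit c v"] nth_map_first_visit[OF cG that, of \<phi>] by simp
  qed
  have "e ^ k = e ^ (k - 2 * (t - 1)) * (e\<^sup>2) ^ (t - 1)"
    using Gamma_vertex_bound[OF cG rep] by (simp add: power_mult[symmetric] power_add[symmetric])
  then show ?thesis
    using norm_integral_walk_le_tree_edges[OF cG rep map_labeling_Lwalks[OF cG \<phi>] \<open>e > 0\<close>] \<open>e > 0\<close>
    by (simp add: tree_cvar prod_dividef)
qed

lemma integral_tight_walk:
  assumes cG: "c \<in> Gamma k t" and rep: "every_edge_repeated k c" and kt: "k = 2 * (t - 1)"
    and \<phi>: "\<phi> \<in> labelings t n" "inj_on \<phi> {1..t}"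
  shows "integral\<^sup>L M (\<lambda>x. \<Prod>s\<in>{1..k}. W (map \<phi> c ! (s - 1)) (map \<phi> c ! s) x)
    = complex_of_real (tree_weight (\<lambda>_ a b. cvar M (W a b)) (walk_parent c) t \<phi>)"
proof -
  define i where "i = map \<phi> c"
  note i = Lwalks_D[OF map_labeling_Lwalks[OF cG \<phi>], folded i_def]
  note c_length = Gamma_D(1)[OF cG]
  define G where "G p = integral\<^sup>L M (\<lambda>x. \<Prod>s\<in>edge_steps i k p. W (i ! (s - 1)) (i ! s) x)" for p
  have edges: "walk_edge i ` {1..k} = (\<lambda>v. walk_edge i (first_visit c v)) ` {2..t}"
    by (rule tight_walk_edges_iso[OF cG rep kt i(3)])
  have G_tree: "G (walk_edge i (first_visit c v)) = complex_of_real (cvar M (W (\<phi> (walk_parent c v)) (\<phi> v)))"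
    if v: "v \<in> {2..t}" for v
  proof -
    have fv: "first_visit c v \<in> {1..k}"
      by (rule walk_parent_Gamma(1)[OF cG v])
    obtain r where r: "r \<in> {1..k}" "r \<noteq> first_visit c v"
      "edge_steps c k (walk_edge c (first_visit c v)) = {first_visit c v, r}"
      "c ! (r - 1) = v" "c ! r = walk_parent c v"
      by (rule tight_edge_steps[OF cG rep kt v])
    have "edge_steps i k (walk_edge i (first_visit c v)) = {first_visit c v, r}"
      using edge_steps_iso[OF i(3) c_length fv] r(3) by simp
    moreover have "i ! (r - 1) = i ! first_visit c v" "i ! r = i ! (first_visit c v - 1)"
    proof -
      have "i ! (r - 1) = \<phi> v" "i ! r = \<phi> (walk_parent c v)"
        unfolding i_def using r(1,4,5) c_length by auto
      then show "i ! (r - 1) = i ! first_visit c v" "i ! r = i ! (first_visit c v - 1)"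
        unfolding i_def nth_map_first_visit[OF cG v] by simp_all
    qed
    ultimately have "G (walk_edge i (first_visit c v))
        = complex_of_real (cvar M (W (i ! (first_visit c v - 1)) (i ! first_visit c v)))"
      unfolding G_def by (rule integral_edge_steps_back_forth[OF i(1,2) fv r(1) r(2)[symmetric]])
    then show ?thesis
      unfolding i_def nth_map_first_visit[OF cG v] .
  qed
  have "integral\<^sup>L M (\<lambda>x. \<Prod>s\<in>{1..k}. W (i ! (s - 1)) (i ! s) x) = (\<Prod>p\<in>walk_edge i ` {1..k}. G p)"
    unfolding G_def by (rule integral_walk_factor[OF i(1,2)])
  also have "\<dots> = (\<Prod>v\<in>{2..t}. G (walk_edge i (first_visit c v)))"
    unfolding edges by (rule prod.reindex[OF tree_edges(1)[OF cG i(3)], unfolded comp_def])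
  also have "\<dots> = complex_of_real (tree_weight (\<lambda>_ a b. cvar M (W a b)) (walk_parent c) t \<phi>)"
    using G_tree by simp
  finally show ?thesis
    unfolding i_def .
qed

lemma column_sum_cvar:
  assumes "b \<in> {1..n}"
  shows "(\<Sum>a=1..n. cvar M (W a b)) = (\<Sum>a=1..n. cvar M (W b a))"
  using cvar_W_commute assms by (intro sum.cong) auto

lemma norm_walk_sum_le:
  assumes cG: "c \<in> Gamma k t" and rep: "every_edge_repeated k c" and "e > 0" and "C \<ge> 0"
    and row: "\<And>a. a \<in> {1..n} \<Longrightarrow> (\<Sum>b=1..n. cvar M (W a b)) \<le> C"
  shows "cmod (\<Sum>i\<in>Lwalks n k c. integral\<^sup>L M (\<lambda>x. \<Prod>s\<in>{1..k}. W (i ! (s - 1)) (i ! s) x))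
    \<le> e ^ (k - 2 * (t - 1)) * (C ^ (t - 1) * real n)"
proof -
  let ?V = "\<lambda>_ a b. cvar M (W a b)"
  have "cmod (\<Sum>i\<in>Lwalks n k c. integral\<^sup>L M (\<lambda>x. \<Prod>s\<in>{1..k}. W (i ! (s - 1)) (i ! s) x))
      \<le> (\<Sum>\<phi>\<in>{\<phi> \<in> labelings t n. inj_on \<phi> {1..t}}.
           cmod (integral\<^sup>L M (\<lambda>x. \<Prod>s\<in>{1..k}. W (map \<phi> c ! (s - 1)) (map \<phi> c ! s) x)))"
    unfolding sum_Lwalks[OF cG] by (rule norm_sum)
  also have "\<dots> \<le> (\<Sum>\<phi>\<in>{\<phi> \<in> labelings t n. inj_on \<phi> {1..t}}.
      e ^ (k - 2 * (t - 1)) * tree_weight ?V (walk_parent c) t \<phi>)"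
    using norm_integral_walk_le[OF cG rep _ _ \<open>e > 0\<close>] by (intro sum_mono) auto
  also have "\<dots> \<le> (\<Sum>\<phi>\<in>labelings t n. e ^ (k - 2 * (t - 1)) * tree_weight ?V (walk_parent c) t \<phi>)"
    using \<open>e > 0\<close> by (intro sum_mono2) (auto simp: finite_PiE cvar_nonneg prod_nonneg)
  also have "\<dots> = e ^ (k - 2 * (t - 1)) * (\<Sum>\<phi>\<in>labelings t n. tree_weight ?V (walk_parent c) t \<phi> * 1)"
    by (simp add: sum_distrib_left)
  also have "\<dots> \<le> e ^ (k - 2 * (t - 1)) * (C ^ (t - 1) * (\<Sum>j=1..n. 1))"
  proof (intro mult_left_mono tree_sum_le)
    show "(\<Sum>a=1..n. cvar M (W a b)) \<le> C" if "b \<in> {1..n}" for b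
      using row[OF that] column_sum_cvar[OF that] by simp
  qed (use Gamma_D(5)[OF cG] walk_parent_Gamma[OF cG] row \<open>C \<ge> 0\<close> \<open>e > 0\<close> in \<open>auto simp: cvar_nonneg\<close>)
  finally show ?thesis
    by simp
qed

lemma norm_tight_walk_sum_diff_le:
  assumes cG: "c \<in> Gamma k t" and rep: "every_edge_repeated k c" and kt: "k = 2 * (t - 1)" and "C \<ge> 0"
    and row: "\<And>a. a \<in> {1..n} \<Longrightarrow> (\<Sum>b=1..n. cvar M (W a b)) \<le> C"
  shows "cmod ((\<Sum>i\<in>Lwalks n k c. integral\<^sup>L M (\<lambda>x. \<Prod>s\<in>{1..k}. W (i ! (s - 1)) (i ! s) x))
      - complex_of_real (\<Sum>\<phi>\<in>labelings t n. tree_weight (\<lambda>_ a b. cvar M (W a b)) (walk_parent c) t \<phi>))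
    \<le> real (t * t) * (e\<^sup>2 * max C 1 ^ (t - 1) * real n)"
proof -
  let ?w = "tree_weight (\<lambda>_ a b. cvar M (W a b)) (walk_parent c) t"
  let ?Inj = "{\<phi> \<in> labelings t n. inj_on \<phi> {1..t}}" and ?NonInj = "{\<phi> \<in> labelings t n. \<not> inj_on \<phi> {1..t}}"
  define I N where "I = (\<Sum>\<phi>\<in>?Inj. ?w \<phi>)" and "N = (\<Sum>\<phi>\<in>?NonInj. ?w \<phi>)"
  have "(\<Sum>\<phi>\<in>labelings t n. ?w \<phi>) = I + N"
    unfolding I_def N_def by (subst sum.union_disjoint[symmetric]) (auto simp: finite_PiE intro: sum.cong)
  moreover have "(\<Sum>i\<in>Lwalks n k c. integral\<^sup>L M (\<lambda>x. \<Prod>s\<in>{1..k}. W (i ! (s - 1)) (i ! s) x))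
      = complex_of_real I"
    unfolding sum_Lwalks[OF cG] I_def of_real_sum using integral_tight_walk[OF cG rep kt] by simp
  moreover have "N \<ge> 0"
    unfolding N_def by (intro sum_nonneg prod_nonneg) (simp add: cvar_nonneg)
  ultimately have "cmod ((\<Sum>i\<in>Lwalks n k c. integral\<^sup>L M (\<lambda>x. \<Prod>s\<in>{1..k}. W (i ! (s - 1)) (i ! s) x))
      - complex_of_real (\<Sum>\<phi>\<in>labelings t n. ?w \<phi>)) = N"
    by simp
  also have "\<dots> \<le> real (t * t) * (e\<^sup>2 * max C 1 ^ (t - 1) * real n)"
    unfolding N_def
  proof (rule tree_sum_noninj_le)
    show "(\<Sum>b=1..n. cvar M (W a b)) \<le> max C 1" if "a \<in> {1..n}" for a
      using row[OF that] by simp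
    show "(\<Sum>a=1..n. cvar M (W a b)) \<le> max C 1" if "b \<in> {1..n}" for b
      using row[OF that] column_sum_cvar[OF that] by simp
  qed (use Gamma_D(5)[OF cG] walk_parent_Gamma[OF cG] cvar_W_le in \<open>auto simp: cvar_nonneg\<close>)
  finally show ?thesis .
qed

end

section \<open>The limits\<close>

locale wigner_ensemble =
  fixes M :: "nat \<Rightarrow> 'a measure" and W :: "nat \<Rightarrow> nat \<Rightarrow> nat \<Rightarrow> 'a \<Rightarrow> complex"
    and \<eta> :: "nat \<Rightarrow> real" and C :: real
  assumes model: "\<And>n. wigner_model (M n) (W n) n (\<eta> n)"
    and eta_pos: "\<And>n. \<eta> n > 0" and eta_lim: "\<eta> \<longlonglongrightarrow> 0" and C_nonneg: "C \<ge> 0"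
    and var_row_le: "\<And>n i. i \<in> {1..n} \<Longrightarrow> (\<Sum>j=1..n. cvar (M n) (W n i j)) \<le> C"
    and var_profile: "(\<lambda>n. (1 / real n) * (\<Sum>i=1..n. \<bar>\<Sum>j=1..n. (cvar (M n) (W n i j) - 1 / real n)\<bar>))
      \<longlonglongrightarrow> 0"
begin

lemma walk_sum_tendsto_0:
  assumes cG: "c \<in> Gamma k t" and rep: "every_edge_repeated k c" and "2 * (t - 1) < k"
  shows "(\<lambda>n. (1 / of_nat n) * (\<Sum>i\<in>Lwalks n k c.
      integral\<^sup>L (M n) (\<lambda>x. \<Prod>s\<in>{1..k}. W n (i ! (s - 1)) (i ! s) x))) \<longlonglongrightarrow> (0::complex)"
proof (rule Lim_null_comparison)
  show "\<forall>\<^sub>F n in sequentially. norm ((1 / of_nat n) * (\<Sum>i\<in>Lwalks n k c.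
      integral\<^sup>L (M n) (\<lambda>x. \<Prod>s\<in>{1..k}. W n (i ! (s - 1)) (i ! s) x))) \<le> \<eta> n ^ (k - 2 * (t - 1)) * C ^ (t - 1)"
  proof (rule eventually_sequentiallyI[of 1])
    fix n :: nat assume "n \<ge> 1"
    have "cmod (\<Sum>i\<in>Lwalks n k c. integral\<^sup>L (M n) (\<lambda>x. \<Prod>s\<in>{1..k}. W n (i ! (s - 1)) (i ! s) x))
        \<le> \<eta> n ^ (k - 2 * (t - 1)) * (C ^ (t - 1) * real n)"
      by (rule wigner_model.norm_walk_sum_le[OF model cG rep eta_pos C_nonneg var_row_le])
    then show "norm ((1 / of_nat n) * (\<Sum>i\<in>Lwalks n k c.
        integral\<^sup>L (M n) (\<lambda>x. \<Prod>s\<in>{1..k}. W n (i ! (s - 1)) (i ! s) x))) \<le> \<eta> n ^ (k - 2 * (t - 1)) * C ^ (t - 1)"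
      using \<open>n \<ge> 1\<close> by (simp add: norm_mult norm_divide divide_le_eq mult_ac)
  qed
  have "(\<lambda>n. \<eta> n ^ (k - 2 * (t - 1)) * C ^ (t - 1)) \<longlonglongrightarrow> 0 ^ (k - 2 * (t - 1)) * C ^ (t - 1)"
    by (intro tendsto_intros eta_lim)
  then show "(\<lambda>n. \<eta> n ^ (k - 2 * (t - 1)) * C ^ (t - 1)) \<longlonglongrightarrow> 0"
    using \<open>2 * (t - 1) < k\<close> by (simp add: zero_power)
qed

lemma row_sum_profile:
  "(\<lambda>n. (1 / real n) * (\<Sum>a=1..n. \<bar>(\<Sum>b=1..n. cvar (M n) (W n a b)) - 1\<bar>)) \<longlonglongrightarrow> 0"
proof -
  have "(\<Sum>i=1..n. \<bar>\<Sum>j=1..n. (cvar (M n) (W n i j) - 1 / real n)\<bar>)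
      = (\<Sum>a=1..n. \<bar>(\<Sum>b=1..n. cvar (M n) (W n a b)) - 1\<bar>)" for n
  proof (rule sum.cong[OF refl])
    fix i assume "i \<in> {1..n}"
    then show "\<bar>\<Sum>j=1..n. (cvar (M n) (W n i j) - 1 / real n)\<bar> = \<bar>(\<Sum>b=1..n. cvar (M n) (W n i b)) - 1\<bar>"
      by (simp add: sum_subtractf)
  qed
  then show ?thesis
    using var_profile by simp
qed

lemma walk_sum_tendsto_1:
  assumes cG: "c \<in> Gamma k t" and rep: "every_edge_repeated k c" and kt: "k = 2 * (t - 1)"
  shows "(\<lambda>n. (1 / of_nat n) * (\<Sum>i\<in>Lwalks n k c.
      integral\<^sup>L (M n) (\<lambda>x. \<Prod>s\<in>{1..k}. W n (i ! (s - 1)) (i ! s) x))) \<longlonglongrightarrow> (1::complex)"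
proof -
  define S where "S n = (\<Sum>i\<in>Lwalks n k c. integral\<^sup>L (M n) (\<lambda>x. \<Prod>s\<in>{1..k}. W n (i ! (s - 1)) (i ! s) x))"
    for n
  define A where "A n = (\<Sum>\<phi>\<in>labelings t n. tree_weight (\<lambda>_ a b. cvar (M n) (W n a b)) (walk_parent c) t \<phi>)"
    for n
  have "(\<lambda>n. (1 / real n) * A n) \<longlonglongrightarrow> 1"
    unfolding A_def
  proof (rule tree_sum_normalized_tendsto[OF Gamma_D(5)[OF cG] _ _ var_row_le _ C_nonneg row_sum_profile])
    show "(\<Sum>a=1..n. cvar (M n) (W n a b)) \<le> C" if "b \<in> {1..n}" for n b
      using var_row_le[OF that] wigner_model.column_sum_cvar[OF model that] by simp
  qed (use walk_parent_Gamma[OF cG] in \<open>auto simp: cvar_nonneg\<close>)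
  then have "(\<lambda>n. complex_of_real ((1 / real n) * A n)) \<longlonglongrightarrow> complex_of_real 1"
    by (rule tendsto_of_real)
  then have tree_limit: "(\<lambda>n. (1 / of_nat n) * complex_of_real (A n)) \<longlonglongrightarrow> 1"
    by simp
  have "(\<lambda>n. (1 / of_nat n) * S n - (1 / of_nat n) * complex_of_real (A n)) \<longlonglongrightarrow> 0"
  proof (rule Lim_null_comparison)
    show "\<forall>\<^sub>F n in sequentially. norm ((1 / of_nat n) * S n - (1 / of_nat n) * complex_of_real (A n))
        \<le> real (t * t) * ((\<eta> n)\<^sup>2 * max C 1 ^ (t - 1))"
    proof (rule eventually_sequentiallyI[of 1])
      fix n :: nat assume "n \<ge> 1"
      have "cmod (S n - complex_of_real (A n)) \<le> real (t * t) * ((\<eta> n)\<^sup>2 * max C 1 ^ (t - 1) * real n)"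
        unfolding S_def A_def
        by (rule wigner_model.norm_tight_walk_sum_diff_le[OF model cG rep kt C_nonneg var_row_le])
      have "norm ((1 / of_nat n) * S n - (1 / of_nat n) * complex_of_real (A n))
          = cmod (S n - complex_of_real (A n)) / real n"
        by (simp add: diff_divide_distrib[symmetric] norm_divide)
      also have "\<dots> \<le> real (t * t) * ((\<eta> n)\<^sup>2 * max C 1 ^ (t - 1))"
        using \<open>cmod (S n - complex_of_real (A n)) \<le> _\<close> \<open>n \<ge> 1\<close> by (simp add: divide_le_eq mult_ac)
      finally show "norm ((1 / of_nat n) * S n - (1 / of_nat n) * complex_of_real (A n))
          \<le> real (t * t) * ((\<eta> n)\<^sup>2 * max C 1 ^ (t - 1))" .
    qed
    have "(\<lambda>n. real (t * t) * ((\<eta> n)\<^sup>2 * max C 1 ^ (t - 1))) \<longlonglongrightarrow> real (t * t) * (0\<^sup>2 * max C 1 ^ (t - 1))"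
      by (intro tendsto_intros eta_lim)
    then show "(\<lambda>n. real (t * t) * ((\<eta> n)\<^sup>2 * max C 1 ^ (t - 1))) \<longlonglongrightarrow> 0"
      by simp
  qed
  then have "(\<lambda>n. (1 / of_nat n) * S n) \<longlonglongrightarrow> 1"
    by (rule Lim_transform[OF tree_limit])
  then show ?thesis
    unfolding S_def .
qed

end

lemma real_half_bound_iff:
  fixes t k :: nat
  assumes "t \<ge> 1"
  shows "real t \<le> real k / 2 + 1 \<longleftrightarrow> 2 * (t - 1) \<le> k"
    and "real t < real k / 2 + 1 \<longleftrightarrow> 2 * (t - 1) < k"
    and "real t = real k / 2 + 1 \<longleftrightarrow> k = 2 * (t - 1)"
proof -
  have "real (2 * (t - 1)) = 2 * real t - 2"
    using assms by (simp add: of_nat_diff)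
  moreover have "2 * (t - 1) \<le> k \<longleftrightarrow> real (2 * (t - 1)) \<le> real k"
    "2 * (t - 1) < k \<longleftrightarrow> real (2 * (t - 1)) < real k" "k = 2 * (t - 1) \<longleftrightarrow> real k = real (2 * (t - 1))"
    by (simp_all only: of_nat_le_iff of_nat_less_iff of_nat_eq_iff)
  ultimately show "real t \<le> real k / 2 + 1 \<longleftrightarrow> 2 * (t - 1) \<le> k"
    and "real t < real k / 2 + 1 \<longleftrightarrow> 2 * (t - 1) < k"
    and "real t = real k / 2 + 1 \<longleftrightarrow> k = 2 * (t - 1)"
    by linarith+
qed

theorem lemma4p2:
  fixes M :: "nat \<Rightarrow> 'a measure"
    and W :: "nat \<Rightarrow> nat \<Rightarrow> nat \<Rightarrow> 'a \<Rightarrow> complex"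
    and \<eta> :: "nat \<Rightarrow> real"
    and C :: real
    and k t :: nat
    and c :: "nat list"
  assumes prob: "\<And>n. prob_space (M n)"
    and herm: "\<And>n i j x. i \<in> {1..n} \<Longrightarrow> j \<in> {1..n} \<Longrightarrow> x \<in> space (M n) \<Longrightarrow>
                  W n j i x = cnj (W n i j x)"
    and indep: "\<And>n. prob_space.indep_vars (M n) (\<lambda>_. borel) (\<lambda>p. W n (fst p) (snd p))
                   {(i, j). 1 \<le> i \<and> i \<le> j \<and> j \<le> n}"
    and mean0: "\<And>n i j. i \<in> {1..n} \<Longrightarrow> j \<in> {1..n} \<Longrightarrow> integral\<^sup>L (M n) (W n i j) = 0"
    and eta_pos: "\<And>n. \<eta> n > 0"
    and eta_lim: "\<eta> \<longlonglongrightarrow> 0"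
    and bdd: "\<And>n i j x. i \<in> {1..n} \<Longrightarrow> j \<in> {1..n} \<Longrightarrow> x \<in> space (M n) \<Longrightarrow>
                  cmod (W n i j x) \<le> \<eta> n"
    and C_nonneg: "C \<ge> 0"
    and var_bdd: "\<And>n i. i \<in> {1..n} \<Longrightarrow> (\<Sum>j=1..n. cvar (M n) (W n i j)) \<le> C"
    and var_lim: "(\<lambda>n. (1 / real n) * (\<Sum>i=1..n. \<bar>\<Sum>j=1..n. (cvar (M n) (W n i j) - 1 / real n)\<bar>))
                    \<longlonglongrightarrow> 0"
    and cG: "c \<in> Gamma k t"
    and no_single: "\<forall>s\<in>{1..k}. \<exists>r\<in>{1..k}. r \<noteq> s \<and>
                      {c ! (s - 1), c ! s} = {c ! (r - 1), c ! r}"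
  shows "real t \<le> real k / 2 + 1 \<and>
    (real t < real k / 2 + 1 \<longrightarrow>
       (\<lambda>n. (1 / of_nat n) * (\<Sum>i\<in>Lwalks n k c.
           integral\<^sup>L (M n) (\<lambda>x. \<Prod>s\<in>{1..k}. W n (i ! (s - 1)) (i ! s) x))) \<longlonglongrightarrow> (0::complex)) \<and>
    (real t = real k / 2 + 1 \<longrightarrow>
       (\<lambda>n. (1 / of_nat n) * (\<Sum>i\<in>Lwalks n k c.
           integral\<^sup>L (M n) (\<lambda>x. \<Prod>s\<in>{1..k}. W n (i ! (s - 1)) (i ! s) x))) \<longlonglongrightarrow> (1::complex))"
proof -
  interpret wigner_ensemble M W \<eta> C
    by (rule wigner_ensemble.intro[OF wigner_model.intro[OF prob herm indep mean0 bdd]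
          eta_pos eta_lim C_nonneg var_bdd var_lim])
  note vertex_count = real_half_bound_iff[OF Gamma_D(5)[OF cG]]
  show ?thesis
    unfolding vertex_count
    using Gamma_vertex_bound[OF cG no_single] walk_sum_tendsto_0[OF cG no_single]
      walk_sum_tendsto_1[OF cG no_single] by blast
qed

end
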